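(* Let $G$ be a finite group and $p$ a prime such that the Sylow $p$-subgroups of $G$ are cyclic of order $p^r$, and let $\mathbf 1_G$ be the trivial $\mathbb{Z}_p[G]$-lattice. If $r\ge1$, then $$v_p(C_{\theta_G}(\mathbf 1_G))=-r\Big(1-\frac{|Z_G(Q)|}{|N_G(Q)|}\Big)$$ for any non-trivial $p$-subgroup $Q$ of $G$. If $r=0$ (i.e.\ $p\nmid|G|$), then $v_p(C_{\theta_G}(\mathbf 1_G))=0$.
   Context: Artin relation: $\theta_G=[G]-\sum_H\alpha_H[H]$, where $H$ runs over representatives of conjugacy classes of cyclic subgroups, $[H]$ stands for the $G$-set $G/H$, and the $\alpha_H\in\mathbb{Q}$ are uniquely determined by $[\mathbf 1]=\sum_H\alpha_H[\mathbb{Q}[G/H]]$ in $A(\mathbb{Q}[G])$ (Artin induction). For a rational Brauer relation $\theta=\sum_K\beta_K[K]$, one has $v_p(C_\theta(\mathbf 1_G))=-\sum_K\beta_K v_p(|K|)$. This is the regulator constant $\prod_i\det(\tfrac1{|H_i|}\langle\ ,\ \rangle|_{M^{H_i}})/\prod_j\det(\tfrac1{|H'_j|}\langle\ ,\ \rangle|_{M^{H'_j}})$ at $M=\mathbb{Z}_p$ with $\langle x,y\rangle=xy$, extended linearly. $Z_G$ and $N_G$ denote the centraliser and normaliser. *)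

theory Defs
  imports "HOL-Algebra.Algebra" "HOL-Computational_Algebra.Primes"
begin

definition cyclic_subgroup :: "('a, 'b) monoid_scheme \<Rightarrow> 'a set \<Rightarrow> bool" where
  "cyclic_subgroup G H \<longleftrightarrow> (\<exists>g \<in> carrier G. H = generate G {g})"

definition sylow_subgroup :: "('a, 'b) monoid_scheme \<Rightarrow> nat \<Rightarrow> 'a set \<Rightarrow> bool" where
  "sylow_subgroup G p P \<longleftrightarrow> subgroup P G \<and> card P = p ^ multiplicity p (order G)"

definition p_subgroup :: "('a, 'b) monoid_scheme \<Rightarrow> nat \<Rightarrow> 'a set \<Rightarrow> bool" where
  "p_subgroup G p Q \<longleftrightarrow> subgroup Q G \<and> (\<exists>k. card Q = p ^ k)"

definition centralizer :: "('a, 'b) monoid_scheme \<Rightarrow> 'a set \<Rightarrow> 'a set" where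
  "centralizer G Q = {g \<in> carrier G. \<forall>q \<in> Q. g \<otimes>\<^bsub>G\<^esub> q = q \<otimes>\<^bsub>G\<^esub> g}"

definition conj_subgroups :: "('a, 'b) monoid_scheme \<Rightarrow> 'a set \<Rightarrow> 'a set \<Rightarrow> bool" where
  "conj_subgroups G H K \<longleftrightarrow> (\<exists>g \<in> carrier G. K = (\<lambda>h. g \<otimes>\<^bsub>G\<^esub> h \<otimes>\<^bsub>G\<^esub> inv\<^bsub>G\<^esub> g) ` H)"

definition left_cosets :: "('a, 'b) monoid_scheme \<Rightarrow> 'a set \<Rightarrow> 'a set set" where
  "left_cosets G H = {x <#\<^bsub>G\<^esub> H | x. x \<in> carrier G}"

definition perm_char :: "('a, 'b) monoid_scheme \<Rightarrow> 'a set \<Rightarrow> 'a \<Rightarrow> nat" where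
  "perm_char G H g = card {C \<in> left_cosets G H. g <#\<^bsub>G\<^esub> C = C}"

definition cyclic_reps :: "('a, 'b) monoid_scheme \<Rightarrow> 'a set set \<Rightarrow> bool" where
  "cyclic_reps G R \<longleftrightarrow> (\<forall>H \<in> R. cyclic_subgroup G H) \<and>
     (\<forall>K. cyclic_subgroup G K \<longrightarrow> (\<exists>!H. H \<in> R \<and> conj_subgroups G H K))"

text \<open>Artin induction data: [1] = sum_H alpha_H [Q[G/H]] in the rational representation
  ring, expressed through characters (rational representations are determined by
  their characters; the character of Q[G/H] is the permutation character).\<close>
definition artin_coeffs :: "('a, 'b) monoid_scheme \<Rightarrow> 'a set set \<Rightarrow> ('a set \<Rightarrow> rat) \<Rightarrow> bool" where
  "artin_coeffs G R \<alpha> \<longleftrightarrow> cyclic_reps G R \<and>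
     (\<forall>g \<in> carrier G. (1::rat) = (\<Sum>H\<in>R. \<alpha> H * of_nat (perm_char G H g)))"

text \<open>v_p(C_theta(1_G)) = - sum_K beta_K v_p(|K|) for theta = sum_K beta_K [K].
  For the Artin relation theta_G = [G] - sum_{H in R} alpha_H [H].\<close>
definition artin_reg_val :: "('a, 'b) monoid_scheme \<Rightarrow> nat \<Rightarrow> 'a set set \<Rightarrow> ('a set \<Rightarrow> rat) \<Rightarrow> rat" where
  "artin_reg_val G p R \<alpha> =
     - (of_nat (multiplicity p (order G)) - (\<Sum>H\<in>R. \<alpha> H * of_nat (multiplicity p (card H))))"

end

theory Submission
  imports Defs
begin

(*
  Let P be a cyclic Sylow p-subgroup of G, of order p^r, and weight each g in G by
  w(g) = v_p(ord g) + [p divides ord g]/(p - 1). This is a class function whose sum over a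
  cyclic group H is |H| v_p(|H|), so pairing it with the Artin identity
  1 = sum_H alpha_H pi_{G/H} gives sum_g w(g) = |G| sum_H alpha_H v_p(|H|).

  On the other hand, the number of g whose p-part has order > p^t is
  |G| (1 - p^(t-r)) |C_G(P)|/|N_G(P)|. The elements with p-part u are u times the
  p'-elements of C_G(u); there are |C_G(u)|/p^r of these (a Burnside-type count, by induction
  on the group), and by fusion each conjugacy class of p-elements meets P in a single
  N_G(P)-orbit, of size |N_G(P) : C_G(P)|. Hence sum_g w(g) = |G| r |C_G(P)|/|N_G(P)|.

  Finally |C_G(Q)|/|N_G(Q)| = |C_G(P)|/|N_G(P)| for every non-trivial Q <= P, because
  N_G(Q) = C_G(Q) N_G(P) (Frattini) and C_G(Q) meets N_G(P) in C_G(P); every non-trivial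
  p-subgroup lies in some Sylow subgroup. If p does not divide |G|, all the valuations vanish.
*)

lemma card_multiples_lessThan:
  fixes n c :: nat
  assumes "c dvd n" "c > 0"
  shows "card {i. i < n \<and> c dvd i} = n div c"
proof -
  have "{i. i < n \<and> c dvd i} = (\<lambda>j. c * j) ` {..<n div c}"
  proof (rule Set.set_eqI, rule iffI)
    fix i assume "i \<in> {i. i < n \<and> c dvd i}"
    then obtain j where j: "i = c * j" "c * j < n" by auto
    then have "j < n div c" using assms by (metis dvd_mult_div_cancel mult_less_cancel1)
    then show "i \<in> (\<lambda>j. c * j) ` {..<n div c}" using j by auto
  next
    fix i assume "i \<in> (\<lambda>j. c * j) ` {..<n div c}"
    then obtain j where j: "i = c * j" "j < n div c" by auto
    then have "c * j < n" using assms by (metis dvd_mult_div_cancel mult_less_cancel1)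
    then show "i \<in> {i. i < n \<and> c dvd i}" using j by auto
  qed
  moreover have "inj_on (\<lambda>j. c * j) {..<n div c}" using assms by (auto simp: inj_on_def)
  ultimately show ?thesis by (simp add: card_image)
qed

lemma card_lessThan_dvd_mult:
  fixes n M :: nat
  assumes "n > 0"
  shows "card {i. i < n \<and> n dvd i * M} = gcd n M"
proof -
  define d where "d = gcd n M"
  have d0: "d > 0" using assms by (simp add: d_def)
  define c where "c = n div d"
  have n_eq: "n = c * d" by (simp add: c_def d_def)
  define M' where "M' = M div d"
  have M_eq: "M = M' * d" by (simp add: M'_def d_def)
  have cop: "coprime c M'"
    unfolding c_def M'_def d_def using assms by (intro div_gcd_coprime) auto
  have "n dvd i * M \<longleftrightarrow> c dvd i" for i
  proof -
    have "n dvd i * M \<longleftrightarrow> c * d dvd (i * M') * d" by (simp add: n_eq M_eq mult.assoc)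
    also have "\<dots> \<longleftrightarrow> c dvd i * M'" using d0 by simp
    also have "\<dots> \<longleftrightarrow> c dvd i" using cop by (simp add: coprime_dvd_mult_left_iff)
    finally show ?thesis .
  qed
  then have "{i. i < n \<and> n dvd i * M} = {i. i < n \<and> c dvd i}" by auto
  also have "card \<dots> = n div c"
    by (rule card_multiples_lessThan) (use n_eq assms in auto)
  also have "n div c = d" using n_eq assms by auto
  finally show ?thesis by (simp add: d_def)
qed

lemma card_filter_split:
  assumes "finite A"
  shows "card A = card {x \<in> A. Q x} + card {x \<in> A. \<not> Q x}"
proof -
  have "card ({x \<in> A. Q x} \<union> {x \<in> A. \<not> Q x}) = card {x \<in> A. Q x} + card {x \<in> A. \<not> Q x}"
    using assms by (intro card_Un_disjoint) auto
  moreover have "{x \<in> A. Q x} \<union> {x \<in> A. \<not> Q x} = A" by auto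
  ultimately show ?thesis by simp
qed

lemma gcd_prime_power_mult:
  fixes p k n' m t :: nat
  assumes p: "Factorial_Ring.prime p" and m: "\<not> p dvd m" and n'm: "n' dvd m"
  shows "gcd (p ^ k * n') (m * p ^ t) = n' * p ^ min k t"
proof -
  obtain m2 where m2: "m = n' * m2" using n'm by (auto simp: dvd_def)
  have "\<not> p dvd m2" using m m2 by auto
  then have cop: "coprime (p ^ (k - min k t)) (m2 * p ^ (t - min k t))"
    using prime_imp_coprime[OF p] by (cases "k \<le> t") auto
  have "gcd (p ^ k * n') (m * p ^ t)
        = n' * p ^ min k t * gcd (p ^ (k - min k t)) (m2 * p ^ (t - min k t))"
    unfolding m2 by (simp add: gcd_mult_distrib_nat power_add[symmetric] ac_simps)
  then show ?thesis using cop by simp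
qed

lemma dvd_pow_power_minus_one:
  fixes k :: int and p :: nat
  assumes "int p dvd k - 1"
  shows "int p ^ (j + 1) dvd k ^ (p ^ j) - 1"
proof (induction j)
  case 0
  then show ?case using assms by simp
next
  case (Suc j)
  define K where "K = k ^ (p ^ j)"
  have IH: "int p ^ (j + 1) dvd K - 1" using Suc K_def by simp
  then have "int p dvd K - 1" by (metis dvd_mult_left power_Suc Suc_eq_plus1)
  then have "int p dvd K ^ i - 1" for i
    using power_diff_1_eq[of K i] by (metis dvd_mult2)
  then have "int p dvd (\<Sum>i<p. K ^ i - 1)" by (simp add: dvd_sum)
  moreover have "(\<Sum>i<p. K ^ i) = (\<Sum>i<p. K ^ i - 1) + int p" by (simp add: sum_subtractf)
  ultimately have "int p dvd (\<Sum>i<p. K ^ i)" by simp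
  then have "int p ^ (j + 1) * int p dvd (K - 1) * (\<Sum>i<p. K ^ i)" using IH by (rule mult_dvd_mono[rotated])
  moreover have "(K - 1) * (\<Sum>i<p. K ^ i) = K ^ p - 1" by (simp add: power_diff_1_eq)
  moreover have "K ^ p = k ^ (p ^ Suc j)" unfolding K_def by (simp add: power_mult[symmetric] mult.commute)
  ultimately show ?case by (simp add: ac_simps)
qed

lemma weight_sum_cyclic_arith:
  fixes p k a n' :: nat
  assumes p: "p > 1" and ka: "k \<le> a"
  shows "(\<Sum>t<a. of_nat (p ^ k * n') - of_nat (n' * p ^ min k t))
           + (of_nat (p ^ k * n') - of_nat n') / (of_nat p - 1)
         = (of_nat (p ^ k * n') * of_nat k :: rat)"
proof -
  define F where "F t = (of_nat (p ^ k * n') - of_nat (n' * p ^ min k t) :: rat)" for t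
  have "(\<Sum>t<a. F t) = (\<Sum>t<k. F t) + (\<Sum>t\<in>{k..<a}. F t)"
    using sum.atLeastLessThan_concat[of 0 k a F] ka by (simp add: lessThan_atLeast0)
  also have "(\<Sum>t\<in>{k..<a}. F t) = 0" unfolding F_def by (intro sum.neutral) (auto simp: mult.commute)
  also have "(\<Sum>t<k. F t) = (\<Sum>t<k. of_nat n' * (of_nat p ^ k - of_nat p ^ t))"
    unfolding F_def by (intro sum.cong) (auto simp: algebra_simps)
  also have "\<dots> = of_nat n' * (of_nat k * of_nat p ^ k - (\<Sum>t<k. (of_nat p :: rat) ^ t))"
    by (simp add: sum_distrib_left[symmetric] sum_subtractf)
  also have "(\<Sum>t<k. (of_nat p :: rat) ^ t) = (of_nat p ^ k - 1) / (of_nat p - 1)"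
    using p by (intro geometric_sum) simp
  finally show ?thesis
    using p unfolding F_def by (simp add: field_simps)
qed

lemma weight_sum_total_arith:
  fixes p a :: nat
  assumes p: "p > 1"
  shows "(\<Sum>t<a. 1 - (of_nat p) ^ t / (of_nat p) ^ a) + (1 - 1 / (of_nat p) ^ a) / (of_nat p - 1)
         = (of_nat a :: rat)"
proof -
  have "(\<Sum>t<a. 1 - (of_nat p) ^ t / (of_nat p) ^ a) = of_nat a - (\<Sum>t<a. (of_nat p :: rat) ^ t) / of_nat p ^ a"
    by (simp add: sum_subtractf sum_divide_distrib)
  also have "(\<Sum>t<a. (of_nat p :: rat) ^ t) = (of_nat p ^ a - 1) / (of_nat p - 1)"
    using p by (intro geometric_sum) simp
  finally show ?thesis
    using p by (simp add: field_simps)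
qed

section \<open>Conjugation, orbits and centralisers\<close>

definition conj_class :: "('a, 'b) monoid_scheme \<Rightarrow> 'a set \<Rightarrow> 'a \<Rightarrow> 'a set" where
  "conj_class G K u = (\<lambda>k. k \<otimes>\<^bsub>G\<^esub> u \<otimes>\<^bsub>G\<^esub> inv\<^bsub>G\<^esub> k) ` K"

context group
begin

lemma inv_mult_cancel_left [simp]: "x \<in> carrier G \<Longrightarrow> y \<in> carrier G \<Longrightarrow> inv x \<otimes> (x \<otimes> y) = y"
  by (simp add: m_assoc[symmetric])

lemma mult_inv_cancel_left [simp]: "x \<in> carrier G \<Longrightarrow> y \<in> carrier G \<Longrightarrow> x \<otimes> (inv x \<otimes> y) = y"
  by (simp add: m_assoc[symmetric])

lemma subgroup_nat_pow_closed: "subgroup H G \<Longrightarrow> h \<in> H \<Longrightarrow> h [^] (n::nat) \<in> H"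
  using subgroup_int_pow_closed[of H h "int n"] by (simp add: int_pow_int)

lemma coprime_pow_mem_subgroup:
  assumes H: "subgroup H G" and n: "n \<in> carrier G"
    and "n [^] (N::nat) \<in> H" and "n [^] (M::nat) \<in> H" and "coprime N M"
  shows "n \<in> H"
proof -
  obtain s t :: int where st: "s * int N + t * int M = 1"
    using bezout_int[of "int N" "int M"] \<open>coprime N M\<close> by (auto simp: coprime_iff_gcd_eq_1)
  have "(n [^] N) [^] s \<otimes> (n [^] M) [^] t \<in> H"
    using assms(3,4) subgroup_int_pow_closed[OF H] subgroup.m_closed[OF H] by simp
  also have "(n [^] N) [^] s \<otimes> (n [^] M) [^] t = n [^] (s * int N + t * int M)"
    using n by (simp add: int_pow_int[symmetric] int_pow_pow int_pow_mult mult.commute)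
  finally show ?thesis using st n by simp
qed

lemma generate_eq_pow_image:
  assumes "finite (carrier G)" and "g \<in> carrier G"
  shows "generate G {g} = (\<lambda>i. g [^] i) ` {..<ord g}"
proof -
  have "{..<ord g} = {0..ord g - 1}" using ord_ge_1[OF assms] by auto
  then show ?thesis
    using generate_pow_on_finite_carrier[OF assms] ord_elems[OF assms] by auto
qed

lemma inj_on_pow_lessThan_ord:
  assumes "finite (carrier G)" and "g \<in> carrier G"
  shows "inj_on (\<lambda>i. g [^] i) {..<ord g}"
proof -
  have "{..<ord g} = {0..ord g - 1}" using ord_ge_1[OF assms] by auto
  then show ?thesis using ord_inj[OF assms(2)] by simp
qed

lemma card_roots_in_cyclic:
  assumes fin: "finite (carrier G)" and g: "g \<in> carrier G"
  shows "card {h \<in> generate G {g}. h [^] (M::nat) = \<one>} = gcd (ord g) M"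
proof -
  have "{h \<in> generate G {g}. h [^] M = \<one>} = (\<lambda>i. g [^] i) ` {i. i < ord g \<and> ord g dvd i * M}"
    using g by (auto simp: generate_eq_pow_image[OF fin g] nat_pow_pow pow_eq_id)
  also have "card \<dots> = card {i. i < ord g \<and> ord g dvd i * M}"
    by (rule card_image, rule inj_on_subset[OF inj_on_pow_lessThan_ord[OF fin g]]) auto
  also have "\<dots> = gcd (ord g) M" using card_lessThan_dvd_mult ord_ge_1[OF fin g] by simp
  finally show ?thesis .
qed

lemma card_nonroots_in_cyclic:
  assumes fin: "finite (carrier G)" and g: "g \<in> carrier G"
  shows "card {h \<in> generate G {g}. h [^] (M::nat) \<noteq> \<one>} = ord g - gcd (ord g) M"
proof -
  have "finite (generate G {g})"
    using finite_subset[OF _ fin] generate_is_subgroup[of "{g}"] g subgroup.subset by auto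
  then show ?thesis
    using card_filter_split[of "generate G {g}" "\<lambda>h. h [^] M = \<one>"] card_roots_in_cyclic[OF fin g, of M]
      generate_pow_card[OF g] by simp
qed

lemma conj_pow:
  assumes g: "g \<in> carrier G" and a: "a \<in> carrier G"
  shows "(g \<otimes> a \<otimes> inv g) [^] (n::nat) = g \<otimes> a [^] n \<otimes> inv g"
proof (induction n)
  case 0
  then show ?case using g by simp
next
  case (Suc n)
  have "(g \<otimes> a \<otimes> inv g) [^] Suc n = (g \<otimes> a [^] n \<otimes> inv g) \<otimes> (g \<otimes> a \<otimes> inv g)"
    using Suc by simp
  also have "\<dots> = g \<otimes> a [^] Suc n \<otimes> inv g" using g a by (simp add: m_assoc)
  finally show ?case .
qed

lemma conj_mult:
  assumes "g \<in> carrier G" "a \<in> carrier G" "b \<in> carrier G"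
  shows "g \<otimes> (a \<otimes> b) \<otimes> inv g = (g \<otimes> a \<otimes> inv g) \<otimes> (g \<otimes> b \<otimes> inv g)"
  using assms by (simp add: m_assoc)

lemma conj_comp:
  assumes "g \<in> carrier G" "h \<in> carrier G" "a \<in> carrier G"
  shows "(g \<otimes> h) \<otimes> a \<otimes> inv (g \<otimes> h) = g \<otimes> (h \<otimes> a \<otimes> inv h) \<otimes> inv g"
  using assms by (simp add: m_assoc inv_mult_group)

lemma inv_conj_conj:
  assumes "g \<in> carrier G" "a \<in> carrier G"
  shows "inv g \<otimes> (g \<otimes> a \<otimes> inv g) \<otimes> g = a"
  using assms by (simp add: m_assoc)

lemma conj_inv_conj:
  assumes "g \<in> carrier G" "a \<in> carrier G"
  shows "g \<otimes> (inv g \<otimes> a \<otimes> g) \<otimes> inv g = a"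
  using assms by (simp add: m_assoc)

lemma conj_eq_iff:
  assumes "g \<in> carrier G" "a \<in> carrier G" "b \<in> carrier G"
  shows "g \<otimes> a \<otimes> inv g = g \<otimes> b \<otimes> inv g \<longleftrightarrow> a = b"
  using assms inv_conj_conj by metis

lemma conj_eq_one_iff:
  assumes "g \<in> carrier G" "a \<in> carrier G"
  shows "g \<otimes> a \<otimes> inv g = \<one> \<longleftrightarrow> a = \<one>"
  using conj_eq_iff[OF assms one_closed] assms by simp

lemma conj_pow_eq_one_iff:
  assumes "g \<in> carrier G" "a \<in> carrier G"
  shows "(g \<otimes> a \<otimes> inv g) [^] (n::nat) = \<one> \<longleftrightarrow> a [^] n = \<one>"
  using assms by (simp add: conj_pow conj_eq_one_iff)

lemma inj_on_conj: "g \<in> carrier G \<Longrightarrow> inj_on (\<lambda>a. g \<otimes> a \<otimes> inv g) (carrier G)"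
  by (auto simp: inj_on_def conj_eq_iff)

lemma card_conj_image:
  assumes "S \<subseteq> carrier G" "g \<in> carrier G"
  shows "card ((\<lambda>h. g \<otimes> h \<otimes> inv g) ` S) = card S"
  using assms inj_on_conj card_image inj_on_subset by blast

lemma conj_eq_self_iff:
  assumes "g \<in> carrier G" "a \<in> carrier G"
  shows "g \<otimes> a \<otimes> inv g = a \<longleftrightarrow> g \<otimes> a = a \<otimes> g"
  using assms by (metis inv_solve_right m_closed)

lemma inv_conj_eq_self:
  assumes "g \<in> carrier G" "u \<in> carrier G" and comm: "g \<otimes> u = u \<otimes> g"
  shows "inv g \<otimes> u \<otimes> g = u"
  using assms(1,2) by (simp add: m_assoc comm[symmetric])

lemma conj_eq_conj_iff:
  assumes c: "h \<in> carrier G" "h' \<in> carrier G" "u \<in> carrier G"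
  shows "h \<otimes> u \<otimes> inv h = h' \<otimes> u \<otimes> inv h' \<longleftrightarrow> (inv h \<otimes> h') \<otimes> u = u \<otimes> (inv h \<otimes> h')"
proof -
  have "h \<otimes> u \<otimes> inv h = h' \<otimes> u \<otimes> inv h'
        \<longleftrightarrow> inv h \<otimes> (h \<otimes> u \<otimes> inv h) \<otimes> inv (inv h) = inv h \<otimes> (h' \<otimes> u \<otimes> inv h') \<otimes> inv (inv h)"
    using c by (intro conj_eq_iff[symmetric]) auto
  also have "\<dots> \<longleftrightarrow> (inv h \<otimes> h') \<otimes> u \<otimes> inv (inv h \<otimes> h') = u"
    using c by (auto simp: m_assoc inv_mult_group)
  also have "\<dots> \<longleftrightarrow> (inv h \<otimes> h') \<otimes> u = u \<otimes> (inv h \<otimes> h')"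
    using c conj_eq_self_iff[of "inv h \<otimes> h'" u] by auto
  finally show ?thesis .
qed

lemma conj_subgroup:
  assumes H: "subgroup H G" and g: "g \<in> carrier G"
  shows "subgroup ((\<lambda>h. g \<otimes> h \<otimes> inv g) ` H) G"
proof (rule subgroupI)
  have Hc: "H \<subseteq> carrier G" using subgroup.subset[OF H] .
  show "(\<lambda>h. g \<otimes> h \<otimes> inv g) ` H \<subseteq> carrier G" using Hc g by auto
  show "(\<lambda>h. g \<otimes> h \<otimes> inv g) ` H \<noteq> {}" using subgroup.one_closed[OF H] by auto
  fix x assume "x \<in> (\<lambda>h. g \<otimes> h \<otimes> inv g) ` H"
  then obtain h where h: "h \<in> H" "x = g \<otimes> h \<otimes> inv g" by auto
  have "inv x = g \<otimes> inv h \<otimes> inv g" using h Hc g by (auto simp: inv_mult_group m_assoc)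
  then show "inv x \<in> (\<lambda>h. g \<otimes> h \<otimes> inv g) ` H" using subgroup.m_inv_closed[OF H h(1)] by auto
next
  fix x y assume "x \<in> (\<lambda>h. g \<otimes> h \<otimes> inv g) ` H" "y \<in> (\<lambda>h. g \<otimes> h \<otimes> inv g) ` H"
  then obtain h k where hk: "h \<in> H" "x = g \<otimes> h \<otimes> inv g" "k \<in> H" "y = g \<otimes> k \<otimes> inv g" by auto
  moreover have "h \<in> carrier G" "k \<in> carrier G" using hk(1,3) subgroup.mem_carrier[OF H] by auto
  ultimately have "x \<otimes> y = g \<otimes> (h \<otimes> k) \<otimes> inv g" using g by (simp add: m_assoc)
  then show "x \<otimes> y \<in> (\<lambda>h. g \<otimes> h \<otimes> inv g) ` H" using subgroup.m_closed[OF H hk(1,3)] by auto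
qed

lemma conj_image_inv_conj_image:
  assumes "g \<in> carrier G" and "S \<subseteq> carrier G"
  shows "(\<lambda>s. g \<otimes> s \<otimes> inv g) ` ((\<lambda>s. inv g \<otimes> s \<otimes> inv (inv g)) ` S) = S"
  using assms by (force simp: image_image conj_inv_conj)

lemma conj_image_eq_iff:
  assumes h: "h \<in> carrier G" and h': "h' \<in> carrier G" and S: "S \<subseteq> carrier G"
  shows "(\<lambda>s. h \<otimes> s \<otimes> inv h) ` S = (\<lambda>s. h' \<otimes> s \<otimes> inv h') ` S
         \<longleftrightarrow> (\<lambda>s. (inv h \<otimes> h') \<otimes> s \<otimes> inv (inv h \<otimes> h')) ` S = S"
proof -
  have comp: "(\<lambda>s. (inv h \<otimes> h') \<otimes> s \<otimes> inv (inv h \<otimes> h')) ` S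
        = (\<lambda>s. inv h \<otimes> s \<otimes> inv (inv h)) ` ((\<lambda>s. h' \<otimes> s \<otimes> inv h') ` S)"
    using h h' S by (force simp: image_image conj_comp)
  have undo: "(\<lambda>s. inv h \<otimes> s \<otimes> inv (inv h)) ` ((\<lambda>s. h \<otimes> s \<otimes> inv h) ` S) = S"
    using h S by (force simp: image_image inv_conj_conj)
  have "(\<lambda>s. h' \<otimes> s \<otimes> inv h') ` S \<subseteq> carrier G" using h' S by auto
  then show ?thesis
    using comp undo conj_image_inv_conj_image[OF h] by metis
qed

lemma orbit_stabilizer_card:
  assumes H: "subgroup H G" and fH: "finite H" and SH: "S \<subseteq> H"
    and fibres: "\<And>h h'. h \<in> H \<Longrightarrow> h' \<in> H \<Longrightarrow> f h = f h' \<longleftrightarrow> inv h \<otimes> h' \<in> S"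
  shows "card (f ` H) * card S = card H"
proof -
  have Hc: "H \<subseteq> carrier G" using H subgroup.subset by blast
  have fibre: "{h \<in> H. f h = f h0} = (\<lambda>s. h0 \<otimes> s) ` S" if h0: "h0 \<in> H" for h0
  proof (rule Set.set_eqI, rule iffI)
    fix h assume "h \<in> {h \<in> H. f h = f h0}"
    then have hH: "h \<in> H" and "f h0 = f h" by auto
    then have h: "h \<in> H" "inv h0 \<otimes> h \<in> S" using fibres[OF h0 hH] by auto
    then have "h = h0 \<otimes> (inv h0 \<otimes> h)" using h0 Hc by (simp add: m_assoc[symmetric] subsetD)
    then show "h \<in> (\<lambda>s. h0 \<otimes> s) ` S" using h(2) by blast
  next
    fix h assume "h \<in> (\<lambda>s. h0 \<otimes> s) ` S"
    then obtain s where s: "s \<in> S" "h = h0 \<otimes> s" by auto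
    have hH: "h \<in> H" using subgroup.m_closed[OF H h0] s SH by auto
    have "inv h0 \<otimes> h = s" using s h0 SH Hc by (simp add: m_assoc[symmetric] subsetD)
    then show "h \<in> {h \<in> H. f h = f h0}" using fibres[OF h0 hH] s(1) hH by simp
  qed
  have card_fibre: "card {h \<in> H. f h = y} = card S" if "y \<in> f ` H" for y
  proof -
    obtain h0 where h0: "h0 \<in> H" "y = f h0" using \<open>y \<in> f ` H\<close> by auto
    have "inj_on (\<lambda>s. h0 \<otimes> s) S" using h0(1) SH Hc by (auto simp: inj_on_def subsetD)
    then show ?thesis using fibre[OF h0(1)] h0(2) by (simp add: card_image)
  qed
  have "card H = (\<Sum>y\<in>f ` H. card {h \<in> H. f h = y})"
    unfolding card_eq_sum by (rule sum.image_gen[OF fH])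
  also have "\<dots> = card (f ` H) * card S" using card_fibre by simp
  finally show ?thesis by simp
qed

lemma lcos_eq_iff:
  assumes S: "subgroup S G" and g: "g \<in> carrier G" and g': "g' \<in> carrier G"
  shows "g <# S = g' <# S \<longleftrightarrow> inv g \<otimes> g' \<in> S"
proof
  assume eq: "g <# S = g' <# S"
  have "g' \<in> g' <# S"
    using subgroup.one_closed[OF S] g' unfolding l_coset_def by force
  then obtain s where "s \<in> S" "g' = g \<otimes> s" using eq unfolding l_coset_def by auto
  then show "inv g \<otimes> g' \<in> S" using g subgroup.mem_carrier[OF S] by (simp add: m_assoc[symmetric])
next
  assume "inv g \<otimes> g' \<in> S"
  then have "g' \<in> g <# S" using subgroup.lcos_module_rev[OF S is_group g g'] by simp
  then show "g <# S = g' <# S" using l_repr_independence[OF _ g S] by simp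
qed

lemma card_lcosets_in_subgroup:
  assumes fin: "finite (carrier G)" and S: "subgroup S G" and K: "subgroup K G" and SK: "S \<subseteq> K"
  shows "card ((\<lambda>g. g <# S) ` K) * card S = card K"
  using subgroup.mem_carrier[OF K] finite_subset[OF subgroup.subset[OF K] fin]
  by (intro orbit_stabilizer_card[OF K _ SK]) (auto simp: lcos_eq_iff[OF S])

lemma lcos_stabilizer_iff:
  assumes C: "C \<subseteq> carrier G" and q: "q \<in> carrier G" and q': "q' \<in> carrier G"
  shows "q <# C = q' <# C \<longleftrightarrow> (inv q \<otimes> q') <# C = C"
proof
  assume "q <# C = q' <# C"
  then have "inv q <# (q <# C) = inv q <# (q' <# C)" by simp
  then show "(inv q \<otimes> q') <# C = C" using C q q' by (simp add: lcos_m_assoc lcos_mult_one)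
next
  assume "(inv q \<otimes> q') <# C = C"
  then have "q <# ((inv q \<otimes> q') <# C) = q <# C" by simp
  then show "q <# C = q' <# C" using C q q' by (simp add: lcos_m_assoc m_assoc[symmetric])
qed

lemma lcos_orbit_lcos:
  assumes Q: "subgroup Q G" and C: "C \<subseteq> carrier G" and q0: "q0 \<in> Q"
  shows "(\<lambda>q. q <# (q0 <# C)) ` Q = (\<lambda>q. q <# C) ` Q"
proof -
  have q0c: "q0 \<in> carrier G" using q0 subgroup.mem_carrier[OF Q] by auto
  have "(\<lambda>q. q <# (q0 <# C)) ` Q = (\<lambda>q. q <# C) ` ((\<lambda>q. q \<otimes> q0) ` Q)"
    unfolding image_image using C q0c subgroup.mem_carrier[OF Q]
    by (intro image_cong) (auto simp: lcos_m_assoc)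
  also have "(\<lambda>q. q \<otimes> q0) ` Q = Q #> q0" unfolding r_coset_def by auto
  also have "\<dots> = Q" by (rule coset_join2[OF q0c Q q0])
  finally show ?thesis .
qed

lemma card_lcos_orbit:
  assumes fin: "finite (carrier G)" and Q: "subgroup Q G" and C: "C \<subseteq> carrier G"
  shows "card ((\<lambda>q. q <# C) ` Q) * card {x \<in> Q. x <# C = C} = card Q"
  using finite_subset[OF subgroup.subset[OF Q] fin] subgroup.mem_carrier[OF Q] subgroup.m_closed[OF Q]
    subgroup.m_inv_closed[OF Q]
  by (intro orbit_stabilizer_card[OF Q]) (auto simp: lcos_stabilizer_iff[OF C])

text \<open>All non-trivial orbits of a \<open>p\<close>-group have size divisible by \<open>p\<close>.\<close>
lemma p_group_lcos_fixed_point: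
  assumes fin: "finite (carrier G)" and p: "Factorial_Ring.prime p"
    and Q: "subgroup Q G" and Qc: "card Q = p ^ k"
    and L: "L \<subseteq> Pow (carrier G)" and closed: "\<And>q C. q \<in> Q \<Longrightarrow> C \<in> L \<Longrightarrow> q <# C \<in> L"
    and ndvd: "\<not> p dvd card L"
  shows "\<exists>C\<in>L. \<forall>q\<in>Q. q <# C = C"
proof (rule ccontr)
  assume no_fixed: "\<not> (\<exists>C\<in>L. \<forall>q\<in>Q. q <# C = C)"
  define orb where "orb C = (\<lambda>q. q <# C) ` Q" for C
  have finL: "finite L" using finite_subset[OF L] fin by (simp add: finite_subset)
  have Lc: "C \<subseteq> carrier G" if "C \<in> L" for C using that L by auto
  have self_orb: "C \<in> orb C" if "C \<in> L" for C
    using subgroup.one_closed[OF Q] lcos_mult_one[OF Lc[OF that]] unfolding orb_def by force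
  have p_dvd_orb: "p dvd card (orb C)" if C: "C \<in> L" for C
  proof -
    have "card (orb C) dvd p ^ k"
      using card_lcos_orbit[OF fin Q Lc[OF C]] Qc unfolding orb_def by (metis dvd_triv_left)
    then obtain i where i: "card (orb C) = p ^ i" using divides_primepow_nat[OF p] by auto
    have "i \<noteq> 0"
    proof
      assume "i = 0"
      then have "card (orb C) = 1" using i by simp
      then obtain D where "orb C = {D}" by (rule card_1_singletonE)
      then have "orb C = {C}" using self_orb[OF C] by simp
      then have "\<forall>q\<in>Q. q <# C = C" unfolding orb_def by blast
      then show False using no_fixed C by blast
    qed
    then show ?thesis using i by simp
  qed
  have "orb ` L \<subseteq> Pow L" using closed unfolding orb_def by auto
  moreover have "\<Union>(orb ` L) = L" using self_orb \<open>orb ` L \<subseteq> Pow L\<close> by blast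
  moreover have "orb C1 \<inter> orb C2 = {}" if "C1 \<in> L" "C2 \<in> L" "orb C1 \<noteq> orb C2" for C1 C2
  proof (rule ccontr)
    assume "orb C1 \<inter> orb C2 \<noteq> {}"
    then obtain q1 q2 where "q1 \<in> Q" "q2 \<in> Q" "q1 <# C1 = q2 <# C2" unfolding orb_def by auto
    then have "orb C1 = orb C2" using lcos_orbit_lcos[OF Q] Lc that(1,2) unfolding orb_def by metis
    then show False using that(3) by simp
  qed
  ultimately have "p dvd card L"
    using dvd_partition[of "orb ` L" p] finL p_dvd_orb by auto
  then show False using ndvd by simp
qed

lemma p_subgroup_conj_into:
  fixes P K Q :: "'a set"
  assumes fin: "finite (carrier G)" and p: "Factorial_Ring.prime p"
    and K: "subgroup K G" and P: "subgroup P G" and PK: "P \<subseteq> K"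
    and ndvd: "\<not> p dvd card ((\<lambda>g. g <# P) ` K)"
    and Q: "subgroup Q G" and QK: "Q \<subseteq> K" and Qc: "card Q = p ^ k"
  shows "\<exists>g\<in>K. \<forall>q\<in>Q. inv g \<otimes> q \<otimes> g \<in> P"
proof -
  have Pc: "P \<subseteq> carrier G" using subgroup.subset[OF P] .
  have Kc: "K \<subseteq> carrier G" using subgroup.subset[OF K] .
  have "\<exists>C\<in>(\<lambda>g. g <# P) ` K. \<forall>q\<in>Q. q <# C = C"
  proof (rule p_group_lcos_fixed_point[OF fin p Q Qc _ _ ndvd])
    show "(\<lambda>g. g <# P) ` K \<subseteq> Pow (carrier G)" using Kc l_coset_subset_G[OF Pc] by blast
    fix q C assume "q \<in> Q" "C \<in> (\<lambda>g. g <# P) ` K"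
    then show "q <# C \<in> (\<lambda>g. g <# P) ` K"
      using QK Kc Pc subgroup.m_closed[OF K] by (auto simp: lcos_m_assoc subsetD)
  qed
  then obtain g where g: "g \<in> K" and fixed: "\<forall>q\<in>Q. q <# (g <# P) = g <# P" by auto
  have gc: "g \<in> carrier G" using g Kc by auto
  show ?thesis
  proof (intro bexI[OF _ g] ballI)
    fix q assume q: "q \<in> Q"
    have qc: "q \<in> carrier G" using q QK Kc by auto
    have "(q \<otimes> g) <# P = g <# P" using fixed q lcos_m_assoc[OF Pc qc gc] by simp
    then have "inv (inv (q \<otimes> g) \<otimes> g) \<in> P"
      using lcos_eq_iff[OF P] qc gc subgroup.m_inv_closed[OF P] by simp
    then show "inv g \<otimes> q \<otimes> g \<in> P" using qc gc by (simp add: inv_mult_group m_assoc)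
  qed
qed

lemma pow_card_subgroup_eq_one:
  assumes fin: "finite (carrier G)" and R: "subgroup R G" and x: "x \<in> R"
  shows "x [^] card R = \<one>"
proof -
  have xc: "x \<in> carrier G" using x subgroup.mem_carrier[OF R] by auto
  have "subgroup (generate G {x}) G" "generate G {x} \<subseteq> R"
    using xc x generate_is_subgroup generate_subgroup_incl[OF _ R] by auto
  then have "card (generate G {x}) dvd card R"
    using card_lcosets_in_subgroup[OF fin _ R] by (metis dvd_triv_right)
  then show ?thesis using generate_pow_card[OF xc] pow_eq_id[OF xc] by simp
qed

lemma conj_pow_iterate:
  assumes n: "n \<in> carrier G" and y: "y \<in> carrier G" and k: "n \<otimes> y \<otimes> inv n = y [^] (k::nat)"
  shows "n [^] (j::nat) \<otimes> y \<otimes> inv (n [^] j) = y [^] (k ^ j)"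
proof (induction j)
  case (Suc j)
  have "n [^] Suc j \<otimes> y \<otimes> inv (n [^] Suc j) = n [^] j \<otimes> (y [^] k) \<otimes> inv (n [^] j)"
    using conj_comp[of "n [^] j" n y] n y k by (simp add: nat_pow_Suc)
  also have "\<dots> = y [^] (k ^ j * k)" using conj_pow[of "n [^] j" y k] n y Suc by (simp add: nat_pow_pow)
  finally show ?case by (simp add: mult.commute)
qed (use y in simp)

lemma subgroup_centralizer:
  assumes S: "S \<subseteq> carrier G"
  shows "subgroup (centralizer G S) G"
proof (rule subgroupI)
  show "centralizer G S \<subseteq> carrier G" unfolding centralizer_def by auto
  show "centralizer G S \<noteq> {}" using S unfolding centralizer_def by (auto simp: subsetD)
next
  fix a assume "a \<in> centralizer G S"
  then have a: "a \<in> carrier G" and comm: "\<And>s. s \<in> S \<Longrightarrow> a \<otimes> s = s \<otimes> a"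
    unfolding centralizer_def by auto
  have "inv a \<otimes> s = s \<otimes> inv a" if s: "s \<in> S" for s
  proof -
    have sc: "s \<in> carrier G" using s S by auto
    have "inv a \<otimes> s = inv a \<otimes> (s \<otimes> a) \<otimes> inv a" using a sc by (simp add: m_assoc)
    also have "\<dots> = s \<otimes> inv a" using a sc by (simp add: comm[OF s, symmetric] m_assoc)
    finally show ?thesis .
  qed
  then show "inv a \<in> centralizer G S" using a unfolding centralizer_def by auto
next
  fix a b assume "a \<in> centralizer G S" "b \<in> centralizer G S"
  then have ab: "a \<in> carrier G" "b \<in> carrier G"
    and comm: "\<And>s. s \<in> S \<Longrightarrow> a \<otimes> s = s \<otimes> a" "\<And>s. s \<in> S \<Longrightarrow> b \<otimes> s = s \<otimes> b"
    unfolding centralizer_def by auto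
  have "a \<otimes> b \<otimes> s = s \<otimes> (a \<otimes> b)" if s: "s \<in> S" for s
  proof -
    have sc: "s \<in> carrier G" using s S by auto
    have "a \<otimes> b \<otimes> s = a \<otimes> s \<otimes> b" using ab sc by (simp add: m_assoc comm(2)[OF s])
    also have "\<dots> = s \<otimes> (a \<otimes> b)" using ab sc by (simp add: m_assoc comm(1)[OF s])
    finally show ?thesis .
  qed
  then show "a \<otimes> b \<in> centralizer G S" using ab unfolding centralizer_def by auto
qed

lemma centralizer_subset_carrier: "centralizer G S \<subseteq> carrier G"
  unfolding centralizer_def by auto

lemma mem_normalizer_iff:
  assumes "S \<subseteq> carrier G"
  shows "g \<in> normalizer G S \<longleftrightarrow> g \<in> carrier G \<and> (\<lambda>s. g \<otimes> s \<otimes> inv g) ` S = S"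
proof -
  have "g <# S #> inv g = (\<lambda>s. g \<otimes> s \<otimes> inv g) ` S" for g
    unfolding l_coset_def r_coset_def by auto
  then show ?thesis unfolding normalizer_def stabilizer_def using assms by auto
qed

lemma normalizer_subset_carrier: "normalizer G S \<subseteq> carrier G"
  unfolding normalizer_def stabilizer_def by auto

lemma centralizer_subset_normalizer:
  assumes S: "S \<subseteq> carrier G"
  shows "centralizer G S \<subseteq> normalizer G S"
proof
  fix g assume "g \<in> centralizer G S"
  then have g: "g \<in> carrier G" and comm: "\<And>s. s \<in> S \<Longrightarrow> g \<otimes> s = s \<otimes> g"
    unfolding centralizer_def by auto
  have "g \<otimes> s \<otimes> inv g = s" if "s \<in> S" for s
    using conj_eq_self_iff[OF g, of s] comm[OF that] that S by auto
  then show "g \<in> normalizer G S" using g unfolding mem_normalizer_iff[OF S] by simp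
qed

lemma normalizer_conj_centralizer:
  assumes Qc: "Q \<subseteq> carrier G" and n: "n \<in> normalizer G Q" and z: "z \<in> centralizer G Q"
  shows "n \<otimes> z \<otimes> inv n \<in> centralizer G Q"
proof -
  have nc: "n \<in> carrier G" and zc: "z \<in> carrier G"
    using n z normalizer_subset_carrier centralizer_subset_carrier by auto
  have nQ: "(\<lambda>s. n \<otimes> s \<otimes> inv n) ` Q = Q" using n mem_normalizer_iff[OF Qc] by auto
  have "(n \<otimes> z \<otimes> inv n) \<otimes> t = t \<otimes> (n \<otimes> z \<otimes> inv n)" if "t \<in> Q" for t
  proof -
    obtain t' where t': "t' \<in> Q" "t = n \<otimes> t' \<otimes> inv n" using \<open>t \<in> Q\<close> nQ by blast
    have t'c: "t' \<in> carrier G" using t' Qc by auto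
    have "(n \<otimes> z \<otimes> inv n) \<otimes> t = n \<otimes> (z \<otimes> t') \<otimes> inv n" using t'(2) conj_mult[OF nc zc t'c] by simp
    also have "z \<otimes> t' = t' \<otimes> z" using z t'(1) unfolding centralizer_def by auto
    also have "n \<otimes> (t' \<otimes> z) \<otimes> inv n = t \<otimes> (n \<otimes> z \<otimes> inv n)" using t'(2) conj_mult[OF nc t'c zc] by simp
    finally show ?thesis .
  qed
  then show ?thesis unfolding centralizer_def using nc zc by simp
qed

lemma subgroup_subset_normalizer:
  assumes H: "subgroup H G"
  shows "H \<subseteq> normalizer G H"
proof
  fix h assume h: "h \<in> H"
  have "(\<lambda>s. h \<otimes> s \<otimes> inv h) ` H = H"
  proof (intro Set.equalityI image_subsetI subsetI)
    fix s assume "s \<in> H"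
    then show "h \<otimes> s \<otimes> inv h \<in> H" using h H by (simp add: subgroup.m_closed subgroup.m_inv_closed)
  next
    fix s assume s: "s \<in> H"
    have "inv h \<otimes> s \<otimes> h \<in> H" using h s H by (simp add: subgroup.m_closed subgroup.m_inv_closed)
    moreover have "s = h \<otimes> (inv h \<otimes> s \<otimes> h) \<otimes> inv h"
      using h s subgroup.mem_carrier[OF H] conj_inv_conj by auto
    ultimately show "s \<in> (\<lambda>s. h \<otimes> s \<otimes> inv h) ` H" by blast
  qed
  then show "h \<in> normalizer G H"
    using h subgroup.mem_carrier[OF H] mem_normalizer_iff[OF subgroup.subset[OF H]] by auto
qed

lemma conj_class_subset:
  assumes "subgroup K G" "u \<in> K"
  shows "conj_class G K u \<subseteq> K"
  using assms unfolding conj_class_def by (auto intro: subgroup.m_closed subgroup.m_inv_closed)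

lemma conj_class_sym:
  assumes K: "subgroup K G" and u: "u \<in> K" and v: "v \<in> conj_class G K u"
  shows "u \<in> conj_class G K v"
proof -
  obtain k where k: "k \<in> K" "v = k \<otimes> u \<otimes> inv k" using v unfolding conj_class_def by auto
  then have "inv k \<otimes> v \<otimes> inv (inv k) = u" using u subgroup.mem_carrier[OF K] inv_conj_conj by auto
  then show ?thesis using subgroup.m_inv_closed[OF K k(1)] unfolding conj_class_def by force
qed

lemma conj_class_eq:
  assumes K: "subgroup K G" and u: "u \<in> K" and v: "v \<in> conj_class G K u"
  shows "conj_class G K v = conj_class G K u"
proof -
  have trans: "w \<in> conj_class G K u"
    if uvw: "u \<in> K" "v \<in> conj_class G K u" "w \<in> conj_class G K v" for u v w
  proof -
    obtain k l where "k \<in> K" "v = k \<otimes> u \<otimes> inv k" "l \<in> K" "w = l \<otimes> v \<otimes> inv l"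
      using uvw unfolding conj_class_def by blast
    then have "l \<otimes> k \<in> K" "w = (l \<otimes> k) \<otimes> u \<otimes> inv (l \<otimes> k)"
      using uvw subgroup.mem_carrier[OF K] subgroup.m_closed[OF K] conj_comp by auto
    then show ?thesis unfolding conj_class_def by blast
  qed
  have "v \<in> K" using conj_class_subset[OF K u] v by auto
  then show ?thesis using trans[OF u v] trans[OF \<open>v \<in> K\<close> conj_class_sym[OF K u v]] by blast
qed

lemma card_conj_class:
  assumes fin: "finite (carrier G)" and K: "subgroup K G" and u: "u \<in> K"
  shows "card (conj_class G K u) * card (K \<inter> centralizer G {u}) = card K"
  unfolding conj_class_def
proof (rule orbit_stabilizer_card[OF K])
  show "finite K" using finite_subset[OF subgroup.subset[OF K] fin] .
  show "K \<inter> centralizer G {u} \<subseteq> K" by blast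
  fix h h' assume h: "h \<in> K" "h' \<in> K"
  then have c: "h \<in> carrier G" "h' \<in> carrier G" "u \<in> carrier G" using u subgroup.mem_carrier[OF K] by auto
  then show "h \<otimes> u \<otimes> inv h = h' \<otimes> u \<otimes> inv h' \<longleftrightarrow> inv h \<otimes> h' \<in> K \<inter> centralizer G {u}"
    using h subgroup.m_closed[OF K] subgroup.m_inv_closed[OF K] conj_eq_conj_iff[OF c]
    unfolding centralizer_def by auto
qed

lemma central_conj_iff:
  assumes K: "subgroup K G" and k: "k \<in> K" and u: "u \<in> K"
  shows "(\<forall>x\<in>K. x \<otimes> (k \<otimes> u \<otimes> inv k) = (k \<otimes> u \<otimes> inv k) \<otimes> x) \<longleftrightarrow> (\<forall>x\<in>K. x \<otimes> u = u \<otimes> x)"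
proof -
  have kc: "k \<in> carrier G" and uc: "u \<in> carrier G" using k u subgroup.mem_carrier[OF K] by auto
  have "k \<otimes> u \<otimes> inv k = u"
    if "(\<forall>x\<in>K. x \<otimes> u = u \<otimes> x) \<or> (\<forall>x\<in>K. x \<otimes> (k \<otimes> u \<otimes> inv k) = (k \<otimes> u \<otimes> inv k) \<otimes> x)"
  proof (cases "\<forall>x\<in>K. x \<otimes> u = u \<otimes> x")
    case True
    then show ?thesis using conj_eq_self_iff[OF kc uc] k by blast
  next
    case False
    define w where "w = k \<otimes> u \<otimes> inv k"
    have wc: "w \<in> carrier G" using kc uc unfolding w_def by simp
    have "k \<otimes> w = w \<otimes> k" using False that k unfolding w_def by blast
    then have "inv k \<otimes> w \<otimes> k = w" using inv_conj_eq_self kc wc by blast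
    then show ?thesis using inv_conj_conj[OF kc uc] unfolding w_def by metis
  qed
  then show ?thesis by metis
qed

lemma conj_image_centralizer:
  assumes K: "subgroup K G" and u: "u \<in> carrier G" and g: "g \<in> K"
  shows "(\<lambda>w. g \<otimes> w \<otimes> inv g) ` (K \<inter> centralizer G {u}) = K \<inter> centralizer G {g \<otimes> u \<otimes> inv g}"
proof -
  have Kc: "K \<subseteq> carrier G" using subgroup.subset[OF K] .
  have gc: "g \<in> carrier G" using g Kc by auto
  have comm: "(g \<otimes> w \<otimes> inv g) \<otimes> (g \<otimes> u \<otimes> inv g) = (g \<otimes> u \<otimes> inv g) \<otimes> (g \<otimes> w \<otimes> inv g)
      \<longleftrightarrow> w \<otimes> u = u \<otimes> w" if "w \<in> carrier G" for w
    using conj_mult[OF gc that u, symmetric] conj_mult[OF gc u that, symmetric] conj_eq_iff[OF gc] that u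
    by simp
  have inK: "g \<otimes> w \<otimes> inv g \<in> K \<longleftrightarrow> w \<in> K" if "w \<in> carrier G" for w
  proof
    assume "g \<otimes> w \<otimes> inv g \<in> K"
    then have "inv g \<otimes> (g \<otimes> w \<otimes> inv g) \<otimes> inv (inv g) \<in> K"
      using K g by (simp add: subgroup.m_closed subgroup.m_inv_closed)
    then show "w \<in> K" using inv_conj_conj[OF gc that] gc by simp
  qed (use K g in \<open>simp add: subgroup.m_closed subgroup.m_inv_closed\<close>)
  show ?thesis
  proof (rule Set.set_eqI, rule iffI)
    fix x assume "x \<in> (\<lambda>w. g \<otimes> w \<otimes> inv g) ` (K \<inter> centralizer G {u})"
    then show "x \<in> K \<inter> centralizer G {g \<otimes> u \<otimes> inv g}"
      using comm inK gc u Kc unfolding centralizer_def by auto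
  next
    fix x assume x: "x \<in> K \<inter> centralizer G {g \<otimes> u \<otimes> inv g}"
    define w where "w = inv g \<otimes> x \<otimes> g"
    have xc: "x \<in> carrier G" using x Kc by auto
    have wc: "w \<in> carrier G" and xw: "x = g \<otimes> w \<otimes> inv g"
      using conj_inv_conj[OF gc xc] gc xc unfolding w_def by auto
    have "w \<in> K \<inter> centralizer G {u}" using x comm[OF wc] inK[OF wc] wc unfolding xw centralizer_def by auto
    then show "x \<in> (\<lambda>w. g \<otimes> w \<otimes> inv g) ` (K \<inter> centralizer G {u})" using xw by blast
  qed
qed

lemma conj_image_roots:
  assumes "A \<subseteq> carrier G" "g \<in> carrier G"
  shows "(\<lambda>w. g \<otimes> w \<otimes> inv g) ` {w \<in> A. w [^] (n::nat) = \<one>}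
         = {x \<in> (\<lambda>w. g \<otimes> w \<otimes> inv g) ` A. x [^] n = \<one>}"
  using assms by (auto simp: conj_pow_eq_one_iff subsetD)

lemma card_centralizer_conj:
  assumes K: "subgroup K G" and u: "u \<in> carrier G" and g: "g \<in> K"
  shows "card (K \<inter> centralizer G {g \<otimes> u \<otimes> inv g}) = card (K \<inter> centralizer G {u})"
    and "card {w \<in> K \<inter> centralizer G {g \<otimes> u \<otimes> inv g}. w [^] (n::nat) = \<one>}
         = card {w \<in> K \<inter> centralizer G {u}. w [^] n = \<one>}"
proof -
  have gc: "g \<in> carrier G" using g subgroup.mem_carrier[OF K] by auto
  have sub: "K \<inter> centralizer G {u} \<subseteq> carrier G" unfolding centralizer_def by auto
  show "card (K \<inter> centralizer G {g \<otimes> u \<otimes> inv g}) = card (K \<inter> centralizer G {u})"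
    using card_conj_image[OF sub gc] conj_image_centralizer[OF K u g] by simp
  show "card {w \<in> K \<inter> centralizer G {g \<otimes> u \<otimes> inv g}. w [^] n = \<one>}
         = card {w \<in> K \<inter> centralizer G {u}. w [^] n = \<one>}"
    using card_conj_image[of "{w \<in> K \<inter> centralizer G {u}. w [^] n = \<one>}" g] sub gc
      conj_image_roots[OF sub gc] conj_image_centralizer[OF K u g] by auto
qed

text \<open>Double counting of the pairs \<open>(u, v)\<close> with \<open>v \<in> V\<close> conjugate to \<open>u\<close> in \<open>K\<close>, weighted
  by \<open>|C\<^sub>K(u)| = |C\<^sub>K(v)|\<close>; the pairs with a fixed \<open>v\<close> contribute \<open>|cl(v)| |C\<^sub>K(v)| = |K|\<close>.\<close>
lemma sum_centralizers_conj_classes: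
  assumes fin: "finite (carrier G)" and K: "subgroup K G" and VK: "V \<subseteq> K"
  shows "(\<Sum>u\<in>{u\<in>K. conj_class G K u \<inter> V \<noteq> {}}.
            card (K \<inter> centralizer G {u}) * card (conj_class G K u \<inter> V)) = card K * card V"
proof -
  define U where "U = {u\<in>K. conj_class G K u \<inter> V \<noteq> {}}"
  have Kc: "K \<subseteq> carrier G" using subgroup.subset[OF K] .
  have fK: "finite K" using finite_subset[OF Kc fin] .
  have fU: "finite U" and fV: "finite V" using finite_subset[OF _ fK] VK unfolding U_def by auto
  have classes: "{u \<in> U. v \<in> conj_class G K u} = conj_class G K v" if v: "v \<in> V" for v
  proof -
    have vK: "v \<in> K" using v VK by auto
    show ?thesis
    proof (rule Set.set_eqI, rule iffI)
      fix u assume "u \<in> {u \<in> U. v \<in> conj_class G K u}"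
      then show "u \<in> conj_class G K v" using conj_class_sym[OF K] unfolding U_def by blast
    next
      fix u assume u: "u \<in> conj_class G K v"
      then have "u \<in> K" "v \<in> conj_class G K u"
        using conj_class_subset[OF K vK] conj_class_sym[OF K vK] by auto
      then show "u \<in> {u \<in> U. v \<in> conj_class G K u}" using v unfolding U_def by auto
    qed
  qed
  have "(\<Sum>u\<in>U. card (K \<inter> centralizer G {u}) * card (conj_class G K u \<inter> V))
        = (\<Sum>u\<in>U. \<Sum>v\<in>{v \<in> V. v \<in> conj_class G K u}. card (K \<inter> centralizer G {u}))"
    by (intro sum.cong) (auto simp: Int_def conj_ac)
  also have "\<dots> = (\<Sum>v\<in>V. \<Sum>u\<in>{u \<in> U. v \<in> conj_class G K u}. card (K \<inter> centralizer G {u}))"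
    by (rule sum.swap_restrict[OF fU fV])
  also have "\<dots> = (\<Sum>v\<in>V. card K)"
  proof (rule sum.cong[OF refl])
    fix v assume v: "v \<in> V"
    have vK: "v \<in> K" using v VK by auto
    have "card (K \<inter> centralizer G {u}) = card (K \<inter> centralizer G {v})" if "u \<in> conj_class G K v" for u
      using that vK Kc card_centralizer_conj(1)[OF K] unfolding conj_class_def by auto
    then have "(\<Sum>u\<in>conj_class G K v. card (K \<inter> centralizer G {u}))
               = card (conj_class G K v) * card (K \<inter> centralizer G {v})" by simp
    then show "(\<Sum>u\<in>{u \<in> U. v \<in> conj_class G K u}. card (K \<inter> centralizer G {u})) = card K"
      using classes[OF v] card_conj_class[OF fin K vK] by simp
  qed
  finally show ?thesis unfolding U_def by simp
qed

end

section \<open>Permutation characters and the Artin relation\<close>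

context group
begin

lemma lcos_stabilizer:
  assumes H: "subgroup H G" and x: "x \<in> carrier G"
  shows "{g \<in> carrier G. g <# (x <# H) = x <# H} = (\<lambda>h. x \<otimes> h \<otimes> inv x) ` H"
proof -
  have Hc: "H \<subseteq> carrier G" using subgroup.subset[OF H] .
  have "g <# (x <# H) = x <# H \<longleftrightarrow> inv x \<otimes> g \<otimes> x \<in> H" if g: "g \<in> carrier G" for g
    using lcos_eq_iff[OF H, of x "g \<otimes> x"] lcos_m_assoc[OF Hc g x] g x
    by (simp add: m_assoc inv_mult_group eq_commute[of "(g \<otimes> x) <# H"])
  moreover have "g \<in> (\<lambda>h. x \<otimes> h \<otimes> inv x) ` H \<longleftrightarrow> g \<in> carrier G \<and> inv x \<otimes> g \<otimes> x \<in> H" for g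
  proof
    assume "g \<in> (\<lambda>h. x \<otimes> h \<otimes> inv x) ` H"
    then obtain h where "h \<in> H" "g = x \<otimes> h \<otimes> inv x" by auto
    then show "g \<in> carrier G \<and> inv x \<otimes> g \<otimes> x \<in> H" using x Hc inv_conj_conj[of x h] by auto
  next
    assume g: "g \<in> carrier G \<and> inv x \<otimes> g \<otimes> x \<in> H"
    then have "g = x \<otimes> (inv x \<otimes> g \<otimes> x) \<otimes> inv x" using x conj_inv_conj by auto
    then show "g \<in> (\<lambda>h. x \<otimes> h \<otimes> inv x) ` H" using g by blast
  qed
  ultimately show ?thesis by blast
qed

text \<open>Frobenius reciprocity for the permutation character of \<open>G/H\<close>.\<close>
lemma sum_perm_char_class_function:
  fixes f :: "'a \<Rightarrow> rat"
  assumes fin: "finite (carrier G)" and H: "subgroup H G"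
    and class_fun: "\<And>x g. x \<in> carrier G \<Longrightarrow> g \<in> carrier G \<Longrightarrow> f (x \<otimes> g \<otimes> inv x) = f g"
  shows "(\<Sum>g\<in>carrier G. of_nat (perm_char G H g) * f g)
         = of_nat (card (left_cosets G H)) * (\<Sum>h\<in>H. f h)"
proof -
  define L where "L = left_cosets G H"
  have L_eq: "L = (\<lambda>x. x <# H) ` carrier G" unfolding L_def left_cosets_def by auto
  have Hc: "H \<subseteq> carrier G" using subgroup.subset[OF H] .
  have "(\<Sum>g\<in>carrier G. of_nat (perm_char G H g) * f g)
        = (\<Sum>g\<in>carrier G. \<Sum>C\<in>{C \<in> L. g <# C = C}. f g)"
    unfolding perm_char_def L_def by simp
  also have "\<dots> = (\<Sum>C\<in>L. \<Sum>g\<in>{g \<in> carrier G. g <# C = C}. f g)"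
    using fin L_eq by (intro sum.swap_restrict) auto
  also have "\<dots> = (\<Sum>C\<in>L. \<Sum>h\<in>H. f h)"
  proof (rule sum.cong[OF refl])
    fix C assume "C \<in> L"
    then obtain x where x: "x \<in> carrier G" "C = x <# H" unfolding L_eq by auto
    have "(\<Sum>g\<in>{g \<in> carrier G. g <# C = C}. f g) = (\<Sum>h\<in>H. f (x \<otimes> h \<otimes> inv x))"
      unfolding x(2) lcos_stabilizer[OF H x(1)]
      by (rule sum.reindex[unfolded comp_def]) (rule inj_on_subset[OF inj_on_conj[OF x(1)] Hc])
    also have "\<dots> = (\<Sum>h\<in>H. f h)" using class_fun x(1) Hc by (intro sum.cong) auto
    finally show "(\<Sum>g\<in>{g \<in> carrier G. g <# C = C}. f g) = (\<Sum>h\<in>H. f h)" .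
  qed
  finally show ?thesis unfolding L_def by simp
qed

lemma card_left_cosets:
  assumes fin: "finite (carrier G)" and H: "subgroup H G"
  shows "card (left_cosets G H) * card H = order G"
proof -
  have "left_cosets G H = (\<lambda>x. x <# H) ` carrier G" unfolding left_cosets_def by auto
  then show ?thesis
    using card_lcosets_in_subgroup[OF fin H subgroup_self subgroup.subset[OF H]] unfolding order_def by simp
qed

lemma artin_coeffs_sum_class_function:
  fixes f :: "'a \<Rightarrow> rat" and c :: "'a set \<Rightarrow> rat"
  assumes fin: "finite (carrier G)" and A: "artin_coeffs G R \<alpha>"
    and class_fun: "\<And>x g. x \<in> carrier G \<Longrightarrow> g \<in> carrier G \<Longrightarrow> f (x \<otimes> g \<otimes> inv x) = f g"
    and cyclic: "\<And>H. cyclic_subgroup G H \<Longrightarrow> (\<Sum>h\<in>H. f h) = of_nat (card H) * c H"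
  shows "(\<Sum>g\<in>carrier G. f g) = of_nat (order G) * (\<Sum>H\<in>R. \<alpha> H * c H)"
proof -
  have cyc: "\<And>H. H \<in> R \<Longrightarrow> cyclic_subgroup G H"
    and artin: "\<And>g. g \<in> carrier G \<Longrightarrow> (\<Sum>H\<in>R. \<alpha> H * of_nat (perm_char G H g)) = 1"
    using A unfolding artin_coeffs_def cyclic_reps_def by auto
  have sub: "subgroup H G" if "H \<in> R" for H
    using cyc[OF that] generate_is_subgroup unfolding cyclic_subgroup_def by auto
  have "(\<Sum>g\<in>carrier G. f g) = (\<Sum>g\<in>carrier G. (\<Sum>H\<in>R. \<alpha> H * of_nat (perm_char G H g)) * f g)"
    using artin by simp
  also have "\<dots> = (\<Sum>H\<in>R. \<alpha> H * (\<Sum>g\<in>carrier G. of_nat (perm_char G H g) * f g))"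
    by (simp add: sum_distrib_right sum_distrib_left sum.swap[of _ "carrier G"] mult.assoc)
  also have "\<dots> = (\<Sum>H\<in>R. \<alpha> H * (of_nat (order G) * c H))"
  proof (rule sum.cong[OF refl])
    fix H assume H: "H \<in> R"
    have "(\<Sum>g\<in>carrier G. of_nat (perm_char G H g) * f g)
          = of_nat (card (left_cosets G H)) * (of_nat (card H) * c H)"
      using sum_perm_char_class_function[OF fin sub[OF H] class_fun] cyclic[OF cyc[OF H]] by simp
    also have "\<dots> = of_nat (order G) * c H"
      using card_left_cosets[OF fin sub[OF H]] by (simp flip: of_nat_mult)
    finally show "\<alpha> H * (\<Sum>g\<in>carrier G. of_nat (perm_char G H g) * f g) = \<alpha> H * (of_nat (order G) * c H)"
      by simp
  qed
  finally show ?thesis by (simp add: sum_distrib_left algebra_simps)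
qed

lemma artin_reg_val_coprime:
  assumes fin: "finite (carrier G)" and R: "cyclic_reps G R" and not_dvd: "\<not> p dvd order G"
  shows "artin_reg_val G p R \<alpha> = 0"
proof -
  have "\<not> p dvd card H" if HR: "H \<in> R" for H
  proof -
    obtain g where "g \<in> carrier G" "H = generate G {g}"
      using R HR unfolding cyclic_reps_def cyclic_subgroup_def by auto
    then have "card H dvd order G" using lagrange generate_is_subgroup by (metis dvd_triv_right empty_subsetI insert_subset)
    then show ?thesis using not_dvd dvd_trans by blast
  qed
  then show ?thesis
    unfolding artin_reg_val_def using not_dvd by (simp add: not_dvd_imp_multiplicity_0)
qed

end

section \<open>Sylow subgroups and \<open>p\<close>-parts\<close>

context group
begin

lemma order_decompose:
  assumes fin: "finite (carrier G)" and p: "Factorial_Ring.prime p"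
  obtains m where "order G = p ^ multiplicity p (order G) * m" and "\<not> p dvd m"
proof -
  have "order G \<noteq> 0" using fin order_gt_0_iff_finite by auto
  moreover have "\<not> is_unit p" using p not_prime_unit by blast
  ultimately show thesis using multiplicity_decompose'[of "order G" p] that by blast
qed

lemma sylow_subgroup_exists:
  assumes fin: "finite (carrier G)" and p: "Factorial_Ring.prime p"
  obtains P where "sylow_subgroup G p P"
proof -
  obtain m where "order G = p ^ multiplicity p (order G) * m"
    using order_decompose[OF fin p] by blast
  then have "sylow G p (multiplicity p (order G)) m"
    using fin p is_group unfolding sylow_def sylow_axioms_def by simp
  then obtain P where "subgroup P G" "card P = p ^ multiplicity p (order G)"
    using sylow.sylow_thm by blast
  then show thesis using that unfolding sylow_subgroup_def by blast
qed

lemma multiplicity_order_eq_sylow_exponent: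
  assumes fin: "finite (carrier G)" and p: "Factorial_Ring.prime p"
    and card: "\<And>P. sylow_subgroup G p P \<Longrightarrow> card P = p ^ r"
  shows "multiplicity p (order G) = r"
proof -
  obtain P where "sylow_subgroup G p P" using sylow_subgroup_exists[OF fin p] by blast
  then have "p ^ multiplicity p (order G) = p ^ r" using card unfolding sylow_subgroup_def by auto
  then show ?thesis using prime_gt_1_nat[OF p] by (simp add: power_inject_exp)
qed

end

locale sylow_setting = group G for G (structure) +
  fixes p a m :: nat and P :: "'a set"
  assumes fin: "finite (carrier G)" and p: "Factorial_Ring.prime p"
    and order_G: "order G = p ^ a * m" and not_dvd_m: "\<not> p dvd m"
    and P: "subgroup P G" and card_P: "card P = p ^ a"
begin

lemma P_carrier: "P \<subseteq> carrier G"
  using subgroup.subset[OF P] .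

lemma p_gt_1: "p > 1"
  using p prime_gt_1_nat by blast

lemma multiplicity_order: "multiplicity p (order G) = a"
proof -
  have "m \<noteq> 0" using not_dvd_m by (metis dvd_0_right)
  moreover have "p ^ a \<noteq> 0" using p_gt_1 by simp
  ultimately have "multiplicity p (p ^ a * m) = multiplicity p (p ^ a) + multiplicity p m"
    using p by (simp add: prime_elem_multiplicity_mult_distrib prime_imp_prime_elem)
  then show ?thesis
    using order_G not_dvd_m p by (simp add: prime_imp_prime_elem not_dvd_imp_multiplicity_0)
qed

lemma index_not_dvd:
  assumes K: "subgroup K G" and PK: "P \<subseteq> K"
  shows "\<not> p dvd card ((\<lambda>g. g <# P) ` K)"
proof
  assume pd: "p dvd card ((\<lambda>g. g <# P) ` K)"
  have "card ((\<lambda>g. g <# P) ` K) * p ^ a dvd p ^ a * m"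
    using card_lcosets_in_subgroup[OF fin P K PK] card_P lagrange[OF K] order_G by (metis dvd_triv_right)
  then have "card ((\<lambda>g. g <# P) ` K) dvd m" using p_gt_1 by (simp add: mult.commute)
  then show False using pd not_dvd_m dvd_trans by blast
qed

lemma p_subgroup_conj_into_sylow:
  assumes K: "subgroup K G" and PK: "P \<subseteq> K" and Q: "subgroup Q G" and QK: "Q \<subseteq> K"
    and card_Q: "card Q = p ^ k"
  shows "\<exists>g\<in>K. \<forall>q\<in>Q. inv g \<otimes> q \<otimes> g \<in> P"
  using p_subgroup_conj_into[OF fin p K P PK index_not_dvd[OF K PK] Q QK card_Q] .

lemma pow_order_sylow_eq_one: "x \<in> P \<Longrightarrow> x [^] (p ^ a) = \<one>"
  using pow_card_subgroup_eq_one[OF fin P] card_P by simp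

lemma p_element_conj_into_sylow:
  assumes K: "subgroup K G" and PK: "P \<subseteq> K" and u: "u \<in> K" and up: "u [^] (p ^ a) = \<one>"
  shows "\<exists>g\<in>K. inv g \<otimes> u \<otimes> g \<in> P"
proof -
  have uc: "u \<in> carrier G" using u subgroup.subset[OF K] by auto
  have "ord u dvd p ^ a" using uc up pow_eq_id by blast
  then obtain i where "ord u = p ^ i" using divides_primepow_nat[OF p] by auto
  then have "card (generate G {u}) = p ^ i" using generate_pow_card[OF uc] by simp
  moreover have "subgroup (generate G {u}) G" "generate G {u} \<subseteq> K"
    using uc u generate_is_subgroup generate_subgroup_incl[OF _ K] by auto
  ultimately obtain g where "g \<in> K" "\<forall>q\<in>generate G {u}. inv g \<otimes> q \<otimes> g \<in> P"
    using p_subgroup_conj_into_sylow[OF K PK] by blast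
  moreover have "u \<in> generate G {u}" using generate.incl[of u "{u}" G] by simp
  ultimately show ?thesis by blast
qed

lemma central_p_element_in_sylow:
  assumes K: "subgroup K G" and PK: "P \<subseteq> K" and u: "u \<in> K" "u [^] (p ^ a) = \<one>"
    and central: "\<forall>k\<in>K. k \<otimes> u = u \<otimes> k"
  shows "u \<in> P"
proof -
  obtain g where g: "g \<in> K" "inv g \<otimes> u \<otimes> g \<in> P" using p_element_conj_into_sylow[OF K PK u] by blast
  have "inv g \<otimes> u \<otimes> g = u" using inv_conj_eq_self central g(1) u(1) subgroup.mem_carrier[OF K] by blast
  then show ?thesis using g(2) by simp
qed

lemma conj_class_meets_sylow_iff:
  assumes K: "subgroup K G" and PK: "P \<subseteq> K" and u: "u \<in> K"
    and invariant: "\<And>k u. k \<in> K \<Longrightarrow> u \<in> K \<Longrightarrow> \<Phi> (k \<otimes> u \<otimes> inv k) \<longleftrightarrow> \<Phi> u"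
  shows "conj_class G K u \<inter> {v \<in> P. \<Phi> v} \<noteq> {} \<longleftrightarrow> u [^] (p ^ a) = \<one> \<and> \<Phi> u"
proof
  assume "conj_class G K u \<inter> {v \<in> P. \<Phi> v} \<noteq> {}"
  then obtain k where k: "k \<in> K" "k \<otimes> u \<otimes> inv k \<in> P" "\<Phi> (k \<otimes> u \<otimes> inv k)"
    unfolding conj_class_def by auto
  have "k \<in> carrier G" "u \<in> carrier G" using k(1) u subgroup.mem_carrier[OF K] by auto
  then show "u [^] (p ^ a) = \<one> \<and> \<Phi> u"
    using pow_order_sylow_eq_one[OF k(2)] conj_pow_eq_one_iff invariant[OF k(1) u] k(3) by auto
next
  assume "u [^] (p ^ a) = \<one> \<and> \<Phi> u"
  then obtain g where g: "g \<in> K" "inv g \<otimes> u \<otimes> g \<in> P" "\<Phi> u"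
    using p_element_conj_into_sylow[OF K PK u] by blast
  have ig: "inv g \<in> K" and gc: "g \<in> carrier G"
    using g(1) subgroup.m_inv_closed[OF K] subgroup.mem_carrier[OF K] by auto
  then have "inv g \<otimes> u \<otimes> inv (inv g) \<in> {v \<in> P. \<Phi> v}"
    using g(2,3) invariant[OF ig u] by simp
  then show "conj_class G K u \<inter> {v \<in> P. \<Phi> v} \<noteq> {}" using ig unfolding conj_class_def by blast
qed

lemma conj_image_eq_sylow:
  assumes Q: "Q \<subseteq> carrier G" and card_Q: "card Q = p ^ a" and g: "g \<in> carrier G"
    and into: "\<forall>q\<in>Q. inv g \<otimes> q \<otimes> g \<in> P"
  shows "(\<lambda>q. inv g \<otimes> q \<otimes> g) ` Q = P"
proof (rule card_subset_eq[OF finite_subset[OF P_carrier fin]])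
  show "(\<lambda>q. inv g \<otimes> q \<otimes> g) ` Q \<subseteq> P" using into by auto
  show "card ((\<lambda>q. inv g \<otimes> q \<otimes> g) ` Q) = card P"
    using card_conj_image[OF Q inv_closed[OF g]] g card_Q card_P by simp
qed

lemma p_element_normalizer_in_sylow:
  assumes x: "x \<in> normalizer G P" and xp: "x [^] (p ^ a) = \<one>"
  shows "x \<in> P"
proof -
  have N: "subgroup (normalizer G P) G" using normalizer_imp_subgroup[OF P_carrier] .
  obtain g where g: "g \<in> normalizer G P" "inv g \<otimes> x \<otimes> g \<in> P"
    using p_element_conj_into_sylow[OF N subgroup_subset_normalizer[OF P] x xp] by blast
  have gc: "g \<in> carrier G" and xc: "x \<in> carrier G"
    using g(1) x normalizer_subset_carrier by auto
  have "g \<otimes> (inv g \<otimes> x \<otimes> g) \<otimes> inv g \<in> P"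
    using g mem_normalizer_iff[OF P_carrier] by blast
  then show ?thesis using conj_inv_conj[OF gc xc] by simp
qed

text \<open>Burnside: \<open>g P g\<^sup>-\<^sup>1\<close> and \<open>P\<close> are both Sylow subgroups of \<open>C\<^sub>K(v)\<close>, so some
  \<open>c \<in> C\<^sub>K(v)\<close> conjugates one onto the other, and \<open>c\<^sup>-\<^sup>1 g\<close> normalises \<open>P\<close>.\<close>
lemma abelian_sylow_fusion:
  assumes abelian: "\<And>x z. x \<in> P \<Longrightarrow> z \<in> P \<Longrightarrow> x \<otimes> z = z \<otimes> x"
    and K: "subgroup K G" and PK: "P \<subseteq> K" and u: "u \<in> P" and v: "v \<in> P" and g: "g \<in> K"
    and conj: "g \<otimes> u \<otimes> inv g = v"
  shows "\<exists>n\<in>K \<inter> normalizer G P. n \<otimes> u \<otimes> inv n = v"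
proof -
  have Kc: "K \<subseteq> carrier G" using subgroup.subset[OF K] .
  have gc: "g \<in> carrier G" using g Kc by auto
  have uc: "u \<in> carrier G" and vc: "v \<in> carrier G" using u v P_carrier by auto
  define K' where "K' = K \<inter> centralizer G {v}"
  have K': "subgroup K' G"
    unfolding K'_def using subgroups_Inter_pair[OF K subgroup_centralizer] vc by auto
  have PK': "P \<subseteq> K'" unfolding K'_def centralizer_def using PK P_carrier abelian v by auto
  define Q where "Q = (\<lambda>q. g \<otimes> q \<otimes> inv g) ` P"
  have Q: "subgroup Q G" unfolding Q_def using conj_subgroup[OF P gc] .
  have card_Q: "card Q = p ^ a" unfolding Q_def using card_conj_image[OF P_carrier gc] card_P by simp
  have QK': "Q \<subseteq> K'"
  proof
    fix x assume "x \<in> Q"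
    then obtain q where q: "q \<in> P" "x = g \<otimes> q \<otimes> inv g" unfolding Q_def by auto
    have qc: "q \<in> carrier G" using q P_carrier by auto
    have xK: "x \<in> K" using q PK g subgroup.m_closed[OF K] subgroup.m_inv_closed[OF K] by auto
    have "x \<otimes> v = g \<otimes> (q \<otimes> u) \<otimes> inv g" using q(2) conj[symmetric] conj_mult gc qc uc by simp
    also have "\<dots> = g \<otimes> (u \<otimes> q) \<otimes> inv g" using abelian[OF q(1) u] by simp
    also have "\<dots> = v \<otimes> x" using q(2) conj[symmetric] conj_mult gc qc uc by simp
    finally show "x \<in> K'" unfolding K'_def centralizer_def using xK Kc by auto
  qed
  obtain c where c: "c \<in> K'" "\<forall>q\<in>Q. inv c \<otimes> q \<otimes> c \<in> P"
    using p_subgroup_conj_into_sylow[OF K' PK' Q QK' card_Q] by blast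
  have cK: "c \<in> K" and cc: "c \<in> carrier G" and cv: "c \<otimes> v = v \<otimes> c"
    using c(1) unfolding K'_def centralizer_def by auto
  define n where "n = inv c \<otimes> g"
  have nK: "n \<in> K" unfolding n_def using subgroup.m_closed[OF K subgroup.m_inv_closed[OF K cK] g] .
  have nc: "n \<in> carrier G" using nK Kc by auto
  have n_conj: "n \<otimes> q \<otimes> inv n = inv c \<otimes> (g \<otimes> q \<otimes> inv g) \<otimes> c" if "q \<in> carrier G" for q
    unfolding n_def using that gc cc by (simp add: m_assoc inv_mult_group)
  have "(\<lambda>q. n \<otimes> q \<otimes> inv n) ` P \<subseteq> P"
    using c(2) n_conj P_carrier unfolding Q_def by (auto simp: subsetD)
  then have "(\<lambda>q. n \<otimes> q \<otimes> inv n) ` P = P"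
    using card_conj_image[OF P_carrier nc] by (intro card_subset_eq[OF finite_subset[OF P_carrier fin]]) auto
  then have nN: "n \<in> K \<inter> normalizer G P" using nK nc mem_normalizer_iff[OF P_carrier] by auto
  have "n \<otimes> u \<otimes> inv n = inv c \<otimes> v \<otimes> c" using n_conj[OF uc] conj by simp
  also have "\<dots> = v" using cc vc by (simp add: m_assoc cv[symmetric])
  finally show ?thesis using nN by blast
qed

lemma exists_p_part_exponent: "\<exists>e::int. int m dvd e \<and> int (p ^ a) dvd 1 - e"
proof -
  have "coprime (int (p ^ a)) (int m)" using prime_imp_coprime[OF p not_dvd_m] by simp
  then obtain s t where "s * int (p ^ a) + t * int m = 1"
    using bezout_int[of "int (p ^ a)" "int m"] by (auto simp: coprime_iff_gcd_eq_1)
  then have "1 - t * int m = s * int (p ^ a)" by linarith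
  then show ?thesis by (intro exI[of _ "t * int m"]) simp
qed

definition p_exponent :: int where
  "p_exponent = (SOME e. int m dvd e \<and> int (p ^ a) dvd 1 - e)"

text \<open>The \<open>p\<close>-part and the \<open>p'\<close>-part of \<open>g\<close> are powers of \<open>g\<close> with exponents
  congruent to \<open>1, 0\<close> modulo \<open>p\<^sup>a\<close> and to \<open>0, 1\<close> modulo \<open>m\<close>.\<close>
definition p_part :: "'a \<Rightarrow> 'a" where
  "p_part g = g [^] p_exponent"

definition p'_part :: "'a \<Rightarrow> 'a" where
  "p'_part g = g [^] (1 - p_exponent)"

lemma p_exponent_dvd: "int m dvd p_exponent" "int (p ^ a) dvd 1 - p_exponent"
  using someI_ex[OF exists_p_part_exponent] unfolding p_exponent_def by auto

lemma ord_dvd_order_G: "x \<in> carrier G \<Longrightarrow> int (ord x) dvd int (p ^ a) * int m"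
  using ord_dvd_group_order order_G by (metis of_nat_dvd_iff of_nat_mult)

lemma p_part_mult_p'_part: "g \<in> carrier G \<Longrightarrow> p_part g \<otimes> p'_part g = g"
  unfolding p_part_def p'_part_def by (simp flip: int_pow_mult)

lemma p_part_commute: "g \<in> carrier G \<Longrightarrow> p_part g \<otimes> p'_part g = p'_part g \<otimes> p_part g"
  unfolding p_part_def p'_part_def by (simp flip: int_pow_mult add: add.commute)

lemma p_part_in_subgroup: "subgroup K G \<Longrightarrow> g \<in> K \<Longrightarrow> p_part g \<in> K"
  unfolding p_part_def by (rule subgroup_int_pow_closed)

lemma p'_part_in_subgroup: "subgroup K G \<Longrightarrow> g \<in> K \<Longrightarrow> p'_part g \<in> K"
  unfolding p'_part_def by (rule subgroup_int_pow_closed)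

lemma p_part_closed [simp]: "g \<in> carrier G \<Longrightarrow> p_part g \<in> carrier G"
  using p_part_in_subgroup[OF subgroup_self] .

lemma pow_p_part: "g \<in> carrier G \<Longrightarrow> p_part g [^] (p ^ a) = \<one>"
proof -
  assume g: "g \<in> carrier G"
  have "int (p ^ a) * int m dvd p_exponent * int (p ^ a)"
    using p_exponent_dvd(1) by (simp add: mult.commute mult_dvd_mono)
  then have "int (ord g) dvd p_exponent * int (p ^ a)"
    using ord_dvd_order_G[OF g] dvd_trans by blast
  then show ?thesis
    using g unfolding p_part_def by (simp add: int_pow_int[symmetric] int_pow_pow int_pow_eq_id)
qed

lemma pow_p'_part: "g \<in> carrier G \<Longrightarrow> p'_part g [^] m = \<one>"
proof -
  assume g: "g \<in> carrier G"
  have "int (p ^ a) * int m dvd (1 - p_exponent) * int m"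
    using p_exponent_dvd(2) by (simp add: mult_dvd_mono)
  then have "int (ord g) dvd (1 - p_exponent) * int m"
    using ord_dvd_order_G[OF g] dvd_trans by blast
  then show ?thesis
    using g unfolding p'_part_def by (simp add: int_pow_int[symmetric] int_pow_pow int_pow_eq_id)
qed

lemma p_part_unique:
  assumes u: "u \<in> carrier G" and w: "w \<in> carrier G" and comm: "u \<otimes> w = w \<otimes> u"
    and up: "u [^] (p ^ a) = \<one>" and wm: "w [^] m = \<one>"
  shows "p_part (u \<otimes> w) = u"
proof -
  have "ord u dvd p ^ a" "ord w dvd m" using u w up wm pow_eq_id by auto
  then have "int (ord u) dvd 1 - p_exponent" "int (ord w) dvd p_exponent"
    using p_exponent_dvd by (meson dvd_trans of_nat_dvd_iff)+
  then have "u [^] p_exponent = u [^] (1::int)" "w [^] p_exponent = w [^] (0::int)"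
    using int_pow_eq[OF u, of p_exponent 1] int_pow_eq[OF w, of p_exponent 0] by simp_all
  then show ?thesis unfolding p_part_def using int_pow_mult_distrib[OF comm u w] u w by simp
qed

lemma fibre_p_part:
  assumes K: "subgroup K G" and u: "u \<in> K" and up: "u [^] (p ^ a) = \<one>"
  shows "{g \<in> K. p_part g = u} = (\<lambda>w. u \<otimes> w) ` {w \<in> K \<inter> centralizer G {u}. w [^] m = \<one>}"
proof (rule Set.set_eqI, rule iffI)
  have Kc: "K \<subseteq> carrier G" using subgroup.subset[OF K] .
  fix g assume "g \<in> {g \<in> K. p_part g = u}"
  then have g: "g \<in> K" "p_part g = u" by auto
  have gc: "g \<in> carrier G" using g Kc by auto
  have "p'_part g \<in> {w \<in> K \<inter> centralizer G {u}. w [^] m = \<one>}"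
    using p'_part_in_subgroup[OF K g(1)] pow_p'_part[OF gc] p_part_commute[OF gc] g(2) Kc
    unfolding centralizer_def by auto
  moreover have "g = u \<otimes> p'_part g" using p_part_mult_p'_part[OF gc] g(2) by simp
  ultimately show "g \<in> (\<lambda>w. u \<otimes> w) ` {w \<in> K \<inter> centralizer G {u}. w [^] m = \<one>}" by blast
next
  fix g assume "g \<in> (\<lambda>w. u \<otimes> w) ` {w \<in> K \<inter> centralizer G {u}. w [^] m = \<one>}"
  then obtain w where w: "w \<in> K" "w \<in> carrier G" "w \<otimes> u = u \<otimes> w" "w [^] m = \<one>" "g = u \<otimes> w"
    unfolding centralizer_def by auto
  have uc: "u \<in> carrier G" using u subgroup.mem_carrier[OF K] by auto
  show "g \<in> {g \<in> K. p_part g = u}"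
    using p_part_unique[OF uc w(2) w(3)[symmetric] up w(4)] subgroup.m_closed[OF K u w(1)] w(5) by simp
qed

lemma card_p_part_in:
  assumes K: "subgroup K G" and U: "U \<subseteq> {u \<in> K. u [^] (p ^ a) = \<one>}"
  shows "card {g \<in> K. p_part g \<in> U} = (\<Sum>u\<in>U. card {w \<in> K \<inter> centralizer G {u}. w [^] m = \<one>})"
proof -
  have Kc: "K \<subseteq> carrier G" using subgroup.subset[OF K] .
  have fK: "finite K" using finite_subset[OF Kc fin] .
  have fU: "finite U" using finite_subset[OF _ fK] U by blast
  have "card {g \<in> K. p_part g \<in> U} = card (\<Union>u\<in>U. {g \<in> K. p_part g = u})"
    by (rule arg_cong[where f = card]) auto
  also have "\<dots> = (\<Sum>u\<in>U. card {g \<in> K. p_part g = u})"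
    by (rule card_UN_disjoint[OF fU]) (use fK in auto)
  also have "\<dots> = (\<Sum>u\<in>U. card {w \<in> K \<inter> centralizer G {u}. w [^] m = \<one>})"
  proof (rule sum.cong[OF refl])
    fix u assume "u \<in> U"
    then have u: "u \<in> K" "u [^] (p ^ a) = \<one>" using U by auto
    have "inj_on (\<lambda>w. u \<otimes> w) {w \<in> K \<inter> centralizer G {u}. w [^] m = \<one>}"
      using u(1) Kc by (auto simp: inj_on_def centralizer_def subsetD)
    then show "card {g \<in> K. p_part g = u} = card {w \<in> K \<inter> centralizer G {u}. w [^] m = \<one>}"
      using fibre_p_part[OF K u] by (simp add: card_image)
  qed
  finally show ?thesis .
qed

lemma card_central_p_part:
  assumes K: "subgroup K G" and PK: "P \<subseteq> K"
  shows "card {g \<in> K. \<forall>k\<in>K. k \<otimes> p_part g = p_part g \<otimes> k}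
         = card {u \<in> P. \<forall>k\<in>K. k \<otimes> u = u \<otimes> k} * card {k \<in> K. k [^] m = \<one>}"
proof -
  define Z where "Z = {u \<in> P. \<forall>k\<in>K. k \<otimes> u = u \<otimes> k}"
  have Kc: "K \<subseteq> carrier G" using subgroup.subset[OF K] .
  have "{g \<in> K. \<forall>k\<in>K. k \<otimes> p_part g = p_part g \<otimes> k} = {g \<in> K. p_part g \<in> Z}"
    unfolding Z_def using central_p_element_in_sylow[OF K PK] p_part_in_subgroup[OF K] pow_p_part Kc
    by auto
  moreover have "Z \<subseteq> {u \<in> K. u [^] (p ^ a) = \<one>}"
    using PK pow_order_sylow_eq_one unfolding Z_def by auto
  moreover have "K \<inter> centralizer G {u} = K" if "u \<in> Z" for u
    using that Kc unfolding Z_def centralizer_def by auto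
  ultimately show ?thesis using card_p_part_in[OF K, of Z] unfolding Z_def[symmetric] by simp
qed

lemma pow_m_p_power_eq_one_iff:
  assumes g: "g \<in> carrier G"
  shows "g [^] (m * p ^ s) = \<one> \<longleftrightarrow> p_part g [^] (p ^ s) = \<one>"
proof -
  define u w where "u = p_part g" and "w = p'_part g"
  have uc: "u \<in> carrier G" and wc: "w \<in> carrier G"
    using g unfolding u_def w_def p'_part_def by auto
  have "g [^] (m * p ^ s) = u [^] (m * p ^ s) \<otimes> (w [^] m) [^] (p ^ s)"
    using p_part_mult_p'_part[OF g] pow_mult_distrib[OF p_part_commute[OF g]] uc wc
    unfolding u_def w_def by (metis nat_pow_pow)
  then have e: "g [^] (m * p ^ s) = u [^] (m * p ^ s)"
    using pow_p'_part[OF g] uc unfolding w_def by simp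
  have "ord u dvd p ^ a" using pow_p_part[OF g] uc pow_eq_id unfolding u_def by auto
  moreover have "coprime (p ^ a) m" using prime_imp_coprime[OF p not_dvd_m] by simp
  ultimately have "coprime (ord u) m" by (rule coprime_divisors[OF _ dvd_refl])
  then have "ord u dvd m * p ^ s \<longleftrightarrow> ord u dvd p ^ s" by (simp add: coprime_dvd_mult_right_iff)
  then show ?thesis using e pow_eq_id[OF uc] unfolding u_def by simp
qed

text \<open>\<open>weight g = v\<^sub>p(ord g) + [p dvd ord g]/(p - 1)\<close>; the correction term makes the sum of
  the weight over a cyclic group \<open>H\<close> equal to \<open>|H| v\<^sub>p(|H|)\<close>.\<close>
definition weight :: "'a \<Rightarrow> rat" where
  "weight g = (\<Sum>t<a. of_bool (g [^] (m * p ^ t) \<noteq> \<one>)) + of_bool (g [^] m \<noteq> \<one>) / (of_nat p - 1)"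

lemma weight_conj:
  assumes "x \<in> carrier G" "g \<in> carrier G"
  shows "weight (x \<otimes> g \<otimes> inv x) = weight g"
  unfolding weight_def using conj_pow_eq_one_iff[OF assms] by simp

lemma sum_weight:
  assumes "finite S"
  shows "(\<Sum>g\<in>S. weight g) = (\<Sum>t<a. of_nat (card {g \<in> S. g [^] (m * p ^ t) \<noteq> \<one>}))
                              + of_nat (card {g \<in> S. g [^] m \<noteq> \<one>}) / (of_nat p - 1)"
proof -
  have "(\<Sum>g\<in>S. weight g) = (\<Sum>g\<in>S. \<Sum>t<a. of_bool (g [^] (m * p ^ t) \<noteq> \<one>))
          + (\<Sum>g\<in>S. of_bool (g [^] m \<noteq> \<one>)) / (of_nat p - 1)"
    unfolding weight_def by (simp only: sum.distrib sum_divide_distrib)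
  also have "(\<Sum>g\<in>S. \<Sum>t<a. of_bool (g [^] (m * p ^ t) \<noteq> \<one>))
             = (\<Sum>t<a. \<Sum>g\<in>S. of_bool (g [^] (m * p ^ t) \<noteq> \<one>) :: rat)"
    by (rule sum.swap)
  finally show ?thesis using assms by (simp add: Int_def)
qed

lemma sum_weight_cyclic:
  assumes g: "g \<in> carrier G"
  shows "(\<Sum>h\<in>generate G {g}. weight h)
         = of_nat (card (generate G {g})) * of_nat (multiplicity p (card (generate G {g})))"
proof -
  define n k where "n = ord g" and "k = multiplicity p n"
  have card_H: "card (generate G {g}) = n" unfolding n_def using generate_pow_card[OF g] by simp
  have fH: "finite (generate G {g})"
    using finite_subset[OF _ fin] generate_is_subgroup[of "{g}"] g subgroup.subset by auto
  have n0: "n > 0" unfolding n_def using ord_ge_1[OF fin g] by simp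
  have "n dvd p ^ a * m" unfolding n_def using ord_dvd_group_order[OF g] order_G by simp
  obtain n' where n': "n = p ^ k * n'" "\<not> p dvd n'"
    using multiplicity_decompose'[of n p] n0 p_gt_1 unfolding k_def by auto
  have "n' dvd m"
    using \<open>n dvd p ^ a * m\<close> n' prime_imp_coprime[OF p n'(2)]
    by (metis coprime_commute coprime_dvd_mult_right_iff coprime_power_left_iff dvd_mult_right)
  have "p ^ k dvd p ^ a"
    using \<open>n dvd p ^ a * m\<close> n'(1) prime_imp_coprime[OF p not_dvd_m]
    by (metis coprime_dvd_mult_left_iff coprime_power_left_iff dvd_mult_left)
  then have ka: "k \<le> a" using p_gt_1 power_dvd_imp_le by blast
  have gcd: "gcd n (m * p ^ t) = n' * p ^ min k t" for t
    using gcd_prime_power_mult[OF p not_dvd_m \<open>n' dvd m\<close>] n'(1) by simp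
  have nonroots: "of_nat (card {h \<in> generate G {g}. h [^] M \<noteq> \<one>}) = (of_nat n - of_nat (gcd n M) :: rat)" for M
    using card_nonroots_in_cyclic[OF fin g, of M] n0 unfolding n_def by (simp add: of_nat_diff)
  have "(\<Sum>h\<in>generate G {g}. weight h)
        = (\<Sum>t<a. of_nat (p ^ k * n') - of_nat (n' * p ^ min k t)) + (of_nat (p ^ k * n') - of_nat n') / (of_nat p - 1)"
    unfolding sum_weight[OF fH] nonroots gcd using gcd[of 0] n'(1) by simp
  also have "\<dots> = of_nat n * of_nat k" using weight_sum_cyclic_arith[OF p_gt_1 ka] n'(1) by simp
  finally show ?thesis unfolding card_H k_def .
qed

end

section \<open>Cyclic Sylow subgroups\<close>

locale cyclic_sylow = sylow_setting +
  fixes y :: 'a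
  assumes y: "y \<in> carrier G" and P_generate: "P = generate G {y}"
begin

lemma ord_y: "ord y = p ^ a"
  using generate_pow_card[OF y] P_generate card_P by simp

lemma P_eq_pow_image: "P = (\<lambda>i. y [^] i) ` {..<p ^ a}"
  using generate_eq_pow_image[OF fin y] P_generate ord_y by simp

lemma P_abelian: "x \<in> P \<Longrightarrow> z \<in> P \<Longrightarrow> x \<otimes> z = z \<otimes> x"
  using y by (auto simp: P_eq_pow_image) (metis add.commute nat_pow_mult)

lemma y_in_P: "y \<in> P"
  using P_generate generate.incl[of y "{y}" G] by simp

lemma card_roots_in_sylow: "d dvd p ^ a \<Longrightarrow> card {v \<in> P. v [^] d = \<one>} = d"
  using card_roots_in_cyclic[OF fin y, of d] P_generate ord_y by (simp add: gcd_nat.absorb2)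

lemma centralizer_generator: "centralizer G {y} = centralizer G P"
proof
  show "centralizer G {y} \<subseteq> centralizer G P"
  proof
    fix g assume "g \<in> centralizer G {y}"
    then have g: "g \<in> carrier G" and "g \<otimes> y = y \<otimes> g" unfolding centralizer_def by auto
    then have gy: "g \<otimes> y \<otimes> inv g = y" using conj_eq_self_iff[OF g y] by blast
    have "g \<otimes> q = q \<otimes> g" if qP: "q \<in> P" for q
    proof -
      obtain i :: nat where q: "q = y [^] i" using qP P_eq_pow_image by auto
      have "g \<otimes> q \<otimes> inv g = q" using conj_pow[OF g y, of i] gy q by simp
      then show ?thesis using conj_eq_self_iff[OF g] q y by blast
    qed
    then show "g \<in> centralizer G P" using g unfolding centralizer_def by auto
  qed
  show "centralizer G P \<subseteq> centralizer G {y}" using y_in_P unfolding centralizer_def by auto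
qed

lemma generator_fixed_by_power:
  assumes fixed: "y [^] (k * i) = y [^] i" and i: "i < p ^ a" "i \<noteq> 0"
  shows "y [^] (k ^ p ^ (a - 1)) = y"
proof -
  have "y [^] int (k * i) = y [^] int i" using fixed by (simp only: int_pow_int)
  then have "int (ord y) dvd int i - int (k * i)" using int_pow_eq[OF y] by blast
  moreover have "int i - int (k * i) = - (int i * (int k - 1))" by (simp add: algebra_simps)
  ultimately have "int (p ^ a) dvd int i * (int k - 1)" using ord_y by simp
  moreover have "\<not> int (p ^ a) dvd int i"
    using i by (metis of_nat_dvd_iff nat_dvd_not_less not_gr0)
  ultimately have "int p dvd int k - 1"
    using p prime_imp_coprime[of "int p" "int k - 1"] coprime_dvd_mult_left_iff
    by (metis coprime_power_left_iff of_nat_power prime_nat_int_transfer)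
  moreover have "a \<noteq> 0" using i by (cases a) auto
  ultimately have "int (p ^ a) dvd int k ^ (p ^ (a - 1)) - 1"
    using dvd_pow_power_minus_one[of p "int k" "a - 1"] by simp
  then have "int (ord y) dvd int 1 - int (k ^ p ^ (a - 1))" using ord_y by (simp add: dvd_diff_commute)
  then have "y [^] int (k ^ p ^ (a - 1)) = y [^] int 1" using int_pow_eq[OF y] by blast
  then have "y [^] (k ^ p ^ (a - 1)) = y [^] (1::nat)" by (simp only: int_pow_int)
  then show ?thesis using y by simp
qed

text \<open>An element of \<open>N\<^sub>G(P)\<close> acts on \<open>P\<close> as \<open>y \<mapsto> y\<^sup>k\<close>. If it fixes some \<open>x \<noteq> 1\<close> then
  \<open>k \<equiv> 1\<close> mod \<open>p\<close>, so its \<open>p\<^sup>a\<^sup>-\<^sup>1\<close>-th power centralises \<open>P\<close>; its \<open>m\<close>-th power lies in \<open>P\<close>.\<close>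
lemma normalizer_centralizes_sylow:
  assumes n: "n \<in> normalizer G P" and x: "x \<in> P" and x1: "x \<noteq> \<one>" and comm: "n \<otimes> x = x \<otimes> n"
  shows "n \<in> centralizer G P"
proof -
  have nc: "n \<in> carrier G" using n normalizer_subset_carrier by auto
  have C: "subgroup (centralizer G {y}) G" using subgroup_centralizer y by auto
  obtain k where k: "n \<otimes> y \<otimes> inv n = y [^] (k::nat)"
    using n y_in_P mem_normalizer_iff[OF P_carrier] P_eq_pow_image by blast
  obtain i where i: "i < p ^ a" "x = y [^] i" using x P_eq_pow_image by auto
  have "i \<noteq> 0" using i x1 by (metis nat_pow_0)
  have "n \<otimes> x \<otimes> inv n = x" using conj_eq_self_iff[OF nc] comm x P_carrier by blast
  then have "(n \<otimes> y \<otimes> inv n) [^] i = y [^] i" using conj_pow[OF nc y, of i] i(2) by simp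
  then have "y [^] (k * i) = y [^] i" using k y by (simp add: nat_pow_pow)
  then have "n [^] p ^ (a - 1) \<otimes> y \<otimes> inv (n [^] p ^ (a - 1)) = y"
    using conj_pow_iterate[OF nc y k] generator_fixed_by_power i(1) \<open>i \<noteq> 0\<close> by simp
  then have "n [^] p ^ (a - 1) \<in> centralizer G {y}"
    using conj_eq_self_iff[of "n [^] p ^ (a - 1)" y] nc y unfolding centralizer_def by auto
  moreover have "n [^] m \<in> centralizer G {y}"
  proof -
    have "(n [^] m) [^] (p ^ a) = \<one>"
      using pow_order_eq_1[OF nc] order_G nc by (simp add: nat_pow_pow mult.commute)
    then have "n [^] m \<in> P"
      using p_element_normalizer_in_sylow normalizer_imp_subgroup[OF P_carrier] n
      by (simp add: subgroup_nat_pow_closed)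
    then show ?thesis using P_abelian y_in_P P_carrier unfolding centralizer_def by auto
  qed
  moreover have "coprime (p ^ (a - 1)) m" using prime_imp_coprime[OF p not_dvd_m] by simp
  ultimately have "n \<in> centralizer G {y}" by (rule coprime_pow_mem_subgroup[OF C nc])
  then show ?thesis using centralizer_generator by simp
qed

lemma subgroup_normalizer_in:
  "subgroup K G \<Longrightarrow> subgroup (K \<inter> normalizer G P) G"
  using subgroups_Inter_pair normalizer_imp_subgroup[OF P_carrier] by blast

lemma subgroup_centralizer_in:
  "subgroup K G \<Longrightarrow> subgroup (K \<inter> centralizer G S) G" if "S \<subseteq> carrier G"
  using subgroups_Inter_pair subgroup_centralizer[OF that] by blast

lemma card_normalizer_orbit:
  assumes K: "subgroup K G" and v: "v \<in> P" and v1: "v \<noteq> \<one>"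
  shows "card ((\<lambda>n. n \<otimes> v \<otimes> inv n) ` (K \<inter> normalizer G P)) * card (K \<inter> centralizer G P)
         = card (K \<inter> normalizer G P)"
proof (rule orbit_stabilizer_card)
  show N: "subgroup (K \<inter> normalizer G P) G" using subgroup_normalizer_in[OF K] .
  show "finite (K \<inter> normalizer G P)" using finite_subset[OF subgroup.subset[OF N] fin] .
  show "K \<inter> centralizer G P \<subseteq> K \<inter> normalizer G P"
    using centralizer_subset_normalizer[OF P_carrier] by auto
  fix h h' assume h: "h \<in> K \<inter> normalizer G P" "h' \<in> K \<inter> normalizer G P"
  have c: "h \<in> carrier G" "h' \<in> carrier G" "v \<in> carrier G"
    using h v P_carrier subgroup.mem_carrier[OF N] by auto
  have hN: "inv h \<otimes> h' \<in> K \<inter> normalizer G P"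
    using subgroup.m_closed[OF N subgroup.m_inv_closed[OF N h(1)] h(2)] .
  have "(inv h \<otimes> h') \<otimes> v = v \<otimes> (inv h \<otimes> h') \<longleftrightarrow> inv h \<otimes> h' \<in> centralizer G P"
    using normalizer_centralizes_sylow[OF _ v v1] hN v unfolding centralizer_def by auto
  then show "h \<otimes> v \<otimes> inv h = h' \<otimes> v \<otimes> inv h' \<longleftrightarrow> inv h \<otimes> h' \<in> K \<inter> centralizer G P"
    using conj_eq_conj_iff[OF c] hN by auto
qed

text \<open>By fusion, a \<open>K\<close>-conjugacy class meets \<open>P\<close> in a single \<open>N\<^sub>K(P)\<close>-orbit, whose size
  is \<open>|N\<^sub>K(P) : C\<^sub>K(P)|\<close>.\<close>
lemma card_conj_class_inter:
  assumes K: "subgroup K G" and PK: "P \<subseteq> K" and VP: "V \<subseteq> P" and V1: "\<one> \<notin> V"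
    and Vcl: "\<And>v k. v \<in> V \<Longrightarrow> k \<in> K \<Longrightarrow> k \<otimes> v \<otimes> inv k \<in> P \<Longrightarrow> k \<otimes> v \<otimes> inv k \<in> V"
    and u: "u \<in> K" and meets: "conj_class G K u \<inter> V \<noteq> {}"
  shows "card (conj_class G K u \<inter> V) * card (K \<inter> centralizer G P) = card (K \<inter> normalizer G P)"
proof -
  obtain v where v: "v \<in> conj_class G K u" "v \<in> V" using meets by auto
  have vP: "v \<in> P" and v1: "v \<noteq> \<one>" using v VP V1 by auto
  have cl: "conj_class G K v = conj_class G K u" using conj_class_eq[OF K u v(1)] .
  have "conj_class G K u \<inter> V = (\<lambda>n. n \<otimes> v \<otimes> inv n) ` (K \<inter> normalizer G P)"
  proof (rule Set.set_eqI, rule iffI)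
    fix w assume w: "w \<in> conj_class G K u \<inter> V"
    then obtain k where k: "k \<in> K" "w = k \<otimes> v \<otimes> inv k" using cl unfolding conj_class_def by auto
    have "w \<in> P" using w VP by auto
    then obtain n where "n \<in> K \<inter> normalizer G P" "n \<otimes> v \<otimes> inv n = w"
      using abelian_sylow_fusion[OF _ K PK vP _ k(1) k(2)[symmetric]] P_abelian by blast
    then show "w \<in> (\<lambda>n. n \<otimes> v \<otimes> inv n) ` (K \<inter> normalizer G P)" by blast
  next
    fix w assume "w \<in> (\<lambda>n. n \<otimes> v \<otimes> inv n) ` (K \<inter> normalizer G P)"
    then obtain n where n: "n \<in> K" "n \<in> normalizer G P" "w = n \<otimes> v \<otimes> inv n" by auto
    have "w \<in> P" using n vP mem_normalizer_iff[OF P_carrier] by blast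
    then show "w \<in> conj_class G K u \<inter> V"
      using Vcl[OF v(2) n(1)] n cl unfolding conj_class_def by auto
  qed
  then show ?thesis using card_normalizer_orbit[OF K vP v1] by simp
qed

lemma sum_centralizers_meeting:
  assumes K: "subgroup K G" and PK: "P \<subseteq> K" and VP: "V \<subseteq> P" and V1: "\<one> \<notin> V"
    and Vcl: "\<And>v k. v \<in> V \<Longrightarrow> k \<in> K \<Longrightarrow> k \<otimes> v \<otimes> inv k \<in> P \<Longrightarrow> k \<otimes> v \<otimes> inv k \<in> V"
  shows "(\<Sum>u\<in>{u\<in>K. conj_class G K u \<inter> V \<noteq> {}}. card (K \<inter> centralizer G {u}))
           * card (K \<inter> normalizer G P) = card K * card V * card (K \<inter> centralizer G P)"
proof -
  have "(\<Sum>u\<in>{u\<in>K. conj_class G K u \<inter> V \<noteq> {}}. card (K \<inter> centralizer G {u})) * card (K \<inter> normalizer G P)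
        = (\<Sum>u\<in>{u\<in>K. conj_class G K u \<inter> V \<noteq> {}}.
             card (K \<inter> centralizer G {u}) * card (conj_class G K u \<inter> V)) * card (K \<inter> centralizer G P)"
    using card_conj_class_inter[OF K PK VP V1 Vcl]
    by (simp add: sum_distrib_right mult.assoc)
  also have "\<dots> = card K * card V * card (K \<inter> centralizer G P)"
    using sum_centralizers_conj_classes[OF fin K] VP PK by auto
  finally show ?thesis .
qed

text \<open>Counting the elements of \<open>K\<close> by their \<open>p\<close>-parts: those with a given \<open>p\<close>-part \<open>u\<close> are
  \<open>u\<close> times the \<open>p'\<close>-elements of \<open>C\<^sub>K(u)\<close>, and \<open>u\<close> may be conjugated into \<open>P\<close>.\<close>
lemma card_p_part_with:
  assumes K: "subgroup K G" and PK: "P \<subseteq> K"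
    and invariant: "\<And>k u. k \<in> K \<Longrightarrow> u \<in> K \<Longrightarrow> \<Phi> (k \<otimes> u \<otimes> inv k) \<longleftrightarrow> \<Phi> u"
    and not_one: "\<not> \<Phi> \<one>"
    and local: "\<And>v. v \<in> P \<Longrightarrow> \<Phi> v \<Longrightarrow>
      p ^ a * card {w \<in> K \<inter> centralizer G {v}. w [^] m = \<one>} = card (K \<inter> centralizer G {v})"
  shows "p ^ a * card {g \<in> K. \<Phi> (p_part g)} * card (K \<inter> normalizer G P)
         = card K * card {v \<in> P. \<Phi> v} * card (K \<inter> centralizer G P)"
proof -
  have Kc: "K \<subseteq> carrier G" using subgroup.subset[OF K] .
  define V where "V = {v \<in> P. \<Phi> v}"
  define U where "U = {u \<in> K. conj_class G K u \<inter> V \<noteq> {}}"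
  have VP: "V \<subseteq> P" and V1: "\<one> \<notin> V" using not_one unfolding V_def by auto
  have Vcl: "k \<otimes> v \<otimes> inv k \<in> V" if "v \<in> V" "k \<in> K" "k \<otimes> v \<otimes> inv k \<in> P" for v k
    using that invariant PK unfolding V_def by auto
  have in_U: "\<exists>k\<in>K. k \<otimes> u \<otimes> inv k \<in> V" if "u \<in> U" for u
    using that unfolding U_def conj_class_def by auto
  have U_eq: "U = {u \<in> K. u [^] (p ^ a) = \<one> \<and> \<Phi> u}"
    using conj_class_meets_sylow_iff[OF K PK _ invariant] unfolding U_def V_def by blast
  have "{g \<in> K. \<Phi> (p_part g)} = {g \<in> K. p_part g \<in> U}"
    using U_eq p_part_in_subgroup[OF K] pow_p_part Kc by auto
  moreover have "U \<subseteq> {u \<in> K. u [^] (p ^ a) = \<one>}" using U_eq by auto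
  ultimately have count:
    "card {g \<in> K. \<Phi> (p_part g)} = (\<Sum>u\<in>U. card {w \<in> K \<inter> centralizer G {u}. w [^] m = \<one>})"
    using card_p_part_in[OF K] by (simp only:)
  have each: "p ^ a * card {w \<in> K \<inter> centralizer G {u}. w [^] m = \<one>} = card (K \<inter> centralizer G {u})"
    if u: "u \<in> U" for u
  proof -
    obtain k where k: "k \<in> K" "k \<otimes> u \<otimes> inv k \<in> V" using in_U[OF u] by blast
    have "u \<in> carrier G" using u Kc unfolding U_def by auto
    then show ?thesis
      using local[of "k \<otimes> u \<otimes> inv k"] k card_centralizer_conj[OF K _ k(1)] unfolding V_def by simp
  qed
  have "p ^ a * card {g \<in> K. \<Phi> (p_part g)} = (\<Sum>u\<in>U. card (K \<inter> centralizer G {u}))"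
    unfolding count sum_distrib_left using each by simp
  then show ?thesis
    using sum_centralizers_meeting[OF K PK VP V1 Vcl] unfolding U_def V_def by simp
qed

text \<open>Induction on \<open>|K|\<close>: the non-central \<open>p\<close>-parts are handled by the hypothesis for their
  centralisers, and \<open>N\<^sub>K(P) = C\<^sub>K(P)\<close> because the central element is fixed.\<close>
lemma card_p'_elements:
  assumes "subgroup K G" and "P \<subseteq> K" and "z \<in> P" and "z \<noteq> \<one>" and "\<forall>k\<in>K. k \<otimes> z = z \<otimes> k"
  shows "p ^ a * card {k \<in> K. k [^] m = \<one>} = card K"
  using assms
proof (induction "card K" arbitrary: K z rule: less_induct)
  case less
  note K = less.prems(1) and PK = less.prems(2) and z = less.prems(3,4) and z_central = less.prems(5)
  have Kc: "K \<subseteq> carrier G" using subgroup.subset[OF K] .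
  have fK: "finite K" using finite_subset[OF Kc fin] .
  define central where "central u \<longleftrightarrow> (\<forall>k\<in>K. k \<otimes> u = u \<otimes> k)" for u
  have "K \<inter> normalizer G P = K \<inter> centralizer G P"
    using normalizer_centralizes_sylow[OF _ z] z_central centralizer_subset_normalizer[OF P_carrier]
    by blast
  moreover have "card (K \<inter> centralizer G P) > 0"
    using subgroup_centralizer_in[OF P_carrier K] finite_subset[OF _ fK] subgroup.one_closed card_gt_0_iff
    by blast
  moreover have "p ^ a * card {g \<in> K. \<not> central (p_part g)} * card (K \<inter> normalizer G P)
        = card K * card {v \<in> P. \<not> central v} * card (K \<inter> centralizer G P)"
  proof (rule card_p_part_with[OF K PK])
    show "\<not> central (k \<otimes> u \<otimes> inv k) \<longleftrightarrow> \<not> central u" if "k \<in> K" "u \<in> K" for k u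
      using central_conj_iff[OF K that] unfolding central_def by simp
    show "\<not> \<not> central \<one>" using Kc unfolding central_def by (auto simp: subsetD)
    fix v assume v: "v \<in> P" "\<not> central v"
    define K' where "K' = K \<inter> centralizer G {v}"
    have vc: "v \<in> carrier G" using v P_carrier by auto
    have K': "subgroup K' G" unfolding K'_def using subgroup_centralizer_in[OF _ K] vc by auto
    have PK': "P \<subseteq> K'" unfolding K'_def centralizer_def using PK P_carrier P_abelian v(1) by auto
    have "v \<noteq> \<one>" using v(2) Kc unfolding central_def by (auto simp: subsetD)
    moreover have "\<forall>k\<in>K'. k \<otimes> v = v \<otimes> k" unfolding K'_def centralizer_def by auto
    moreover have "card K' < card K"
      using v(2) fK unfolding K'_def central_def centralizer_def by (intro psubset_card_mono) auto
    ultimately show "p ^ a * card {w \<in> K \<inter> centralizer G {v}. w [^] m = \<one>} = card (K \<inter> centralizer G {v})"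
      using less.hyps[OF _ K' PK' v(1)] unfolding K'_def by simp
  qed
  ultimately have noncentral:
    "p ^ a * card {g \<in> K. \<not> central (p_part g)} = card K * card {v \<in> P. \<not> central v}"
    by simp
  define Z c where "Z = card {v \<in> P. central v}" and "c = card {k \<in> K. k [^] m = \<one>}"
  have "card K = Z * c + card {g \<in> K. \<not> central (p_part g)}"
    using card_filter_split[OF fK, of "\<lambda>g. central (p_part g)"] card_central_p_part[OF K PK]
    unfolding Z_def c_def central_def by simp
  then have "p ^ a * card K = p ^ a * (Z * c) + card K * card {v \<in> P. \<not> central v}"
    using noncentral by (simp add: distrib_left)
  moreover have "p ^ a = Z + card {v \<in> P. \<not> central v}"
    using card_filter_split[OF finite_subset[OF P_carrier fin], of central] card_P unfolding Z_def by simp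
  ultimately have "Z * card K = Z * (p ^ a * c)" by (simp add: algebra_simps)
  moreover have "Z > 0"
    using z_central finite_subset[OF P_carrier fin] subgroup.one_closed[OF P] Kc
    unfolding Z_def central_def by (auto simp: card_gt_0_iff subsetD)
  ultimately show ?case unfolding c_def by simp
qed

lemma card_large_p_part:
  assumes "s \<le> a"
  shows "p ^ a * card {g \<in> carrier G. g [^] (m * p ^ s) \<noteq> \<one>} * card (normalizer G P)
         = order G * (p ^ a - p ^ s) * card (centralizer G P)"
proof -
  have "p ^ a * card {g \<in> carrier G. p_part g [^] (p ^ s) \<noteq> \<one>} * card (carrier G \<inter> normalizer G P)
        = card (carrier G) * card {v \<in> P. v [^] (p ^ s) \<noteq> \<one>} * card (carrier G \<inter> centralizer G P)"
  proof (rule card_p_part_with[OF subgroup_self P_carrier])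
    show "(k \<otimes> u \<otimes> inv k) [^] p ^ s \<noteq> \<one> \<longleftrightarrow> u [^] p ^ s \<noteq> \<one>" if "k \<in> carrier G" "u \<in> carrier G" for k u
      using conj_pow_eq_one_iff[OF that] by simp
    fix v assume v: "v \<in> P" "v [^] p ^ s \<noteq> \<one>"
    have vc: "v \<in> carrier G" using v P_carrier by auto
    show "p ^ a * card {w \<in> carrier G \<inter> centralizer G {v}. w [^] m = \<one>}
          = card (carrier G \<inter> centralizer G {v})"
      using v vc P_carrier P_abelian
      by (intro card_p'_elements[OF subgroup_centralizer_in[OF _ subgroup_self], of _ v])
         (auto simp: centralizer_def)
  qed simp
  moreover have "{g \<in> carrier G. g [^] (m * p ^ s) \<noteq> \<one>} = {g \<in> carrier G. p_part g [^] (p ^ s) \<noteq> \<one>}"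
    using pow_m_p_power_eq_one_iff by auto
  moreover have "card {v \<in> P. v [^] (p ^ s) \<noteq> \<one>} = p ^ a - p ^ s"
  proof -
    have "{v \<in> P. v [^] (p ^ s) \<noteq> \<one>} = P - {v \<in> P. v [^] (p ^ s) = \<one>}" by auto
    moreover have "card {v \<in> P. v [^] (p ^ s) = \<one>} = p ^ s"
      using card_roots_in_sylow assms by (simp add: le_imp_power_dvd)
    ultimately show ?thesis using card_P finite_subset[OF P_carrier fin] by (simp add: card_Diff_subset)
  qed
  ultimately show ?thesis
    using normalizer_subset_carrier centralizer_subset_carrier by (simp add: Int_absorb1 order_def)
qed

lemma sum_weight_total:
  "(\<Sum>g\<in>carrier G. weight g)
   = of_nat (order G) * of_nat a * of_nat (card (centralizer G P)) / of_nat (card (normalizer G P))"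
proof -
  define W where "W = of_nat (order G) * of_nat (card (centralizer G P)) / (of_nat (card (normalizer G P)) :: rat)"
  have N: "card (normalizer G P) > 0"
    using normalizer_imp_subgroup[OF P_carrier] finite_subset[OF normalizer_subset_carrier fin]
      subgroup.one_closed card_gt_0_iff by blast
  have count: "of_nat (card {g \<in> carrier G. g [^] (m * p ^ t) \<noteq> \<one>}) = W * (1 - of_nat p ^ t / of_nat p ^ a)"
    if "t \<le> a" for t
  proof -
    have "p ^ t \<le> p ^ a" using that p_gt_1 by simp
    then have "of_nat (p ^ a) * of_nat (card {g \<in> carrier G. g [^] (m * p ^ t) \<noteq> \<one>}) * of_nat (card (normalizer G P))
          = (of_nat (order G) * (of_nat p ^ a - of_nat p ^ t) * of_nat (card (centralizer G P)) :: rat)"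
      using card_large_p_part[OF that] by (simp flip: of_nat_mult of_nat_power of_nat_diff)
    then show ?thesis unfolding W_def using N p_gt_1 by (simp add: field_simps)
  qed
  have "(\<Sum>g\<in>carrier G. weight g)
        = (\<Sum>t<a. W * (1 - of_nat p ^ t / of_nat p ^ a)) + W * (1 - 1 / of_nat p ^ a) / (of_nat p - 1)"
    unfolding sum_weight[OF fin] using count count[of 0] by simp
  also have "\<dots> = W * ((\<Sum>t<a. 1 - of_nat p ^ t / of_nat p ^ a) + (1 - 1 / of_nat p ^ a) / (of_nat p - 1))"
    by (simp only: distrib_left sum_distrib_left times_divide_eq_right)
  also have "\<dots> = W * of_nat a" using weight_sum_total_arith[OF p_gt_1, of a] by simp
  finally show ?thesis unfolding W_def by simp
qed

lemma artin_reg_val_cyclic_sylow: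
  assumes A: "artin_coeffs G R \<alpha>"
  shows "artin_reg_val G p R \<alpha>
         = - of_nat a * (1 - of_nat (card (centralizer G P)) / of_nat (card (normalizer G P)))"
proof -
  define S where "S = (\<Sum>H\<in>R. \<alpha> H * of_nat (multiplicity p (card H)))"
  have "of_nat (order G) * S = (\<Sum>g\<in>carrier G. weight g)"
    unfolding S_def
    by (intro artin_coeffs_sum_class_function[symmetric, OF fin A weight_conj])
       (auto simp: cyclic_subgroup_def sum_weight_cyclic)
  also have "\<dots> = of_nat (order G) * (of_nat a * of_nat (card (centralizer G P)) / of_nat (card (normalizer G P)))"
    unfolding sum_weight_total by simp
  finally have "of_nat (order G) * S
      = of_nat (order G) * (of_nat a * of_nat (card (centralizer G P)) / of_nat (card (normalizer G P)))" .
  moreover have "(of_nat (order G) :: rat) \<noteq> 0" using fin order_gt_0_iff_finite by simp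
  ultimately have "S = of_nat a * of_nat (card (centralizer G P)) / of_nat (card (normalizer G P))"
    using mult_left_cancel by blast
  then show ?thesis unfolding artin_reg_val_def S_def[symmetric] multiplicity_order by (simp add: algebra_simps)
qed

lemma subgroup_of_sylow_eq_roots:
  assumes R: "subgroup R G" and RP: "R \<subseteq> P"
  shows "R = {x \<in> P. x [^] card R = \<one>}"
proof -
  have "card R dvd p ^ a"
    using card_lcosets_in_subgroup[OF fin R P RP] card_P by (metis dvd_triv_right)
  then have card: "card {x \<in> P. x [^] card R = \<one>} = card R" by (rule card_roots_in_sylow)
  have "R \<subseteq> {x \<in> P. x [^] card R = \<one>}" using RP pow_card_subgroup_eq_one[OF fin R] by auto
  then show ?thesis
    using card card_subset_eq[OF finite_subset[OF _ finite_subset[OF P_carrier fin]]] by auto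
qed

lemma normalizer_sylow_subset:
  assumes Q: "subgroup Q G" and QP: "Q \<subseteq> P"
  shows "normalizer G P \<subseteq> normalizer G Q"
proof
  fix n assume n: "n \<in> normalizer G P"
  have nc: "n \<in> carrier G" using n normalizer_subset_carrier by auto
  have Qc: "Q \<subseteq> carrier G" using QP P_carrier by auto
  define R where "R = (\<lambda>q. n \<otimes> q \<otimes> inv n) ` Q"
  have R: "subgroup R G" unfolding R_def using conj_subgroup[OF Q nc] .
  have RP: "R \<subseteq> P" unfolding R_def using n QP mem_normalizer_iff[OF P_carrier] by blast
  have "card R = card Q" unfolding R_def using card_conj_image[OF Qc nc] .
  then have "R = Q" using subgroup_of_sylow_eq_roots[OF R RP] subgroup_of_sylow_eq_roots[OF Q QP] by simp
  then show "n \<in> normalizer G Q" unfolding R_def using nc mem_normalizer_iff[OF Qc] by simp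
qed

text \<open>Frattini argument: \<open>P\<close> is a Sylow subgroup of \<open>C\<^sub>G(Q)\<close>, which \<open>N\<^sub>G(Q)\<close> normalises.\<close>
lemma normalizer_conj_sylow_eq_centralizer_conj:
  assumes Q: "subgroup Q G" and QP: "Q \<subseteq> P"
  shows "(\<lambda>g. (\<lambda>s. g \<otimes> s \<otimes> inv g) ` P) ` normalizer G Q
         = (\<lambda>g. (\<lambda>s. g \<otimes> s \<otimes> inv g) ` P) ` centralizer G Q"
    (is "?f ` _ = ?f ` _")
proof
  have Qc: "Q \<subseteq> carrier G" using QP P_carrier by auto
  show "?f ` centralizer G Q \<subseteq> ?f ` normalizer G Q" using centralizer_subset_normalizer[OF Qc] by auto
  show "?f ` normalizer G Q \<subseteq> ?f ` centralizer G Q"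
  proof
    fix Pn assume "Pn \<in> ?f ` normalizer G Q"
    then obtain n where n: "n \<in> normalizer G Q" "Pn = ?f n" by auto
    have nc: "n \<in> carrier G" using n(1) normalizer_subset_carrier by auto
    have P_CQ: "P \<subseteq> centralizer G Q" unfolding centralizer_def using P_carrier QP P_abelian by auto
    have Pn: "subgroup Pn G" "card Pn = p ^ a" "Pn \<subseteq> carrier G"
      using n(2) conj_subgroup[OF P nc] card_conj_image[OF P_carrier nc] card_P subgroup.subset by auto
    have "Pn \<subseteq> centralizer G Q" using n normalizer_conj_centralizer[OF Qc] P_CQ by auto
    then obtain c where c: "c \<in> centralizer G Q" "\<forall>z\<in>Pn. inv c \<otimes> z \<otimes> c \<in> P"
      using p_subgroup_conj_into_sylow[OF subgroup_centralizer[OF Qc] P_CQ Pn(1)] Pn(2) by blast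
    have cc: "c \<in> carrier G" using c(1) centralizer_subset_carrier by auto
    have "(\<lambda>z. inv c \<otimes> z \<otimes> inv (inv c)) ` Pn = P"
      using conj_image_eq_sylow[OF Pn(3,2) cc c(2)] cc by simp
    then have "?f c = Pn" using conj_image_inv_conj_image[OF cc Pn(3)] by simp
    then show "Pn \<in> ?f ` centralizer G Q" using c(1) by auto
  qed
qed

text \<open>The \<open>N\<^sub>G(Q)\<close>- and \<open>C\<^sub>G(Q)\<close>-orbits of \<open>P\<close> coincide, with stabilisers \<open>N\<^sub>G(P)\<close> and
  \<open>C\<^sub>G(Q) \<inter> N\<^sub>G(P) = C\<^sub>G(P)\<close>.\<close>
lemma card_centralizer_normalizer_ratio:
  assumes Q: "subgroup Q G" and QP: "Q \<subseteq> P" and Q1: "Q \<noteq> {\<one>}"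
  shows "card (centralizer G Q) * card (normalizer G P) = card (normalizer G Q) * card (centralizer G P)"
proof -
  define f where "f g = (\<lambda>s. g \<otimes> s \<otimes> inv g) ` P" for g
  have Qc: "Q \<subseteq> carrier G" using QP P_carrier by auto
  have CQ: "subgroup (centralizer G Q) G" using subgroup_centralizer[OF Qc] .
  have NQ: "subgroup (normalizer G Q) G" using normalizer_imp_subgroup[OF Qc] .
  have NP_NQ: "normalizer G P \<subseteq> normalizer G Q" using normalizer_sylow_subset[OF Q QP] .
  have CP_CQ: "centralizer G P \<subseteq> centralizer G Q" unfolding centralizer_def using QP by auto
  obtain x where x: "x \<in> Q" "x \<noteq> \<one>" using Q1 subgroup.one_closed[OF Q] by blast
  have fibres: "f h = f h' \<longleftrightarrow> inv h \<otimes> h' \<in> normalizer G P" if "h \<in> carrier G" "h' \<in> carrier G" for h h'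
    unfolding f_def conj_image_eq_iff[OF that P_carrier] mem_normalizer_iff[OF P_carrier] using that by simp
  have orbit_N: "card (f ` normalizer G Q) * card (normalizer G P) = card (normalizer G Q)"
  proof (rule orbit_stabilizer_card[OF NQ finite_subset[OF normalizer_subset_carrier fin] NP_NQ])
    fix h h' assume "h \<in> normalizer G Q" "h' \<in> normalizer G Q"
    then show "f h = f h' \<longleftrightarrow> inv h \<otimes> h' \<in> normalizer G P"
      using fibres normalizer_subset_carrier by blast
  qed
  have orbit_C: "card (f ` centralizer G Q) * card (centralizer G P) = card (centralizer G Q)"
  proof (rule orbit_stabilizer_card[OF CQ finite_subset[OF centralizer_subset_carrier fin] CP_CQ])
    fix h h' assume h: "h \<in> centralizer G Q" "h' \<in> centralizer G Q"
    have hc: "h \<in> carrier G" "h' \<in> carrier G" using h centralizer_subset_carrier by auto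
    have k: "inv h \<otimes> h' \<in> centralizer G Q"
      using subgroup.m_closed[OF CQ subgroup.m_inv_closed[OF CQ h(1)] h(2)] .
    then have "inv h \<otimes> h' \<otimes> x = x \<otimes> (inv h \<otimes> h')" using x(1) unfolding centralizer_def by auto
    then have "inv h \<otimes> h' \<in> normalizer G P \<longleftrightarrow> inv h \<otimes> h' \<in> centralizer G P"
      using normalizer_centralizes_sylow[of "inv h \<otimes> h'" x] x QP
        centralizer_subset_normalizer[OF P_carrier] by auto
    then show "f h = f h' \<longleftrightarrow> inv h \<otimes> h' \<in> centralizer G P" using fibres[OF hc] by simp
  qed
  have frattini: "f ` normalizer G Q = f ` centralizer G Q"
    using normalizer_conj_sylow_eq_centralizer_conj[OF Q QP] unfolding f_def .
  have "card (centralizer G Q) * card (normalizer G P)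
        = (card (f ` centralizer G Q) * card (normalizer G P)) * card (centralizer G P)"
    using orbit_C[symmetric] by (simp add: algebra_simps)
  also have "\<dots> = card (normalizer G Q) * card (centralizer G P)"
    using orbit_N frattini by simp
  finally show ?thesis .
qed

lemma artin_reg_val_cyclic_sylow_subgroup:
  assumes A: "artin_coeffs G R \<alpha>" and Q: "subgroup Q G" "Q \<subseteq> P" "Q \<noteq> {\<one>}"
  shows "artin_reg_val G p R \<alpha>
         = - of_nat a * (1 - of_nat (card (centralizer G Q)) / of_nat (card (normalizer G Q)))"
proof -
  have pos: "card (normalizer G S) > 0" if "S \<subseteq> carrier G" for S
    using normalizer_imp_subgroup[OF that] finite_subset[OF normalizer_subset_carrier fin]
      subgroup.one_closed card_gt_0_iff by blast
  have "of_nat (card (centralizer G P)) / of_nat (card (normalizer G P))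
        = (of_nat (card (centralizer G Q)) / of_nat (card (normalizer G Q)) :: rat)"
    using card_centralizer_normalizer_ratio[OF Q] pos[OF P_carrier] pos[of Q] Q(2) P_carrier
    by (simp add: field_simps flip: of_nat_mult)
  then show ?thesis using artin_reg_val_cyclic_sylow[OF A] by simp
qed

end

context group
begin

lemma sylow_setting_of_sylow_subgroup:
  assumes fin: "finite (carrier G)" and p: "Factorial_Ring.prime p" and P: "sylow_subgroup G p P"
  shows "sylow_setting G p (multiplicity p (order G)) (order G div p ^ multiplicity p (order G)) P"
proof -
  define k where "k = multiplicity p (order G)"
  obtain m where m: "order G = p ^ k * m" "\<not> p dvd m"
    using order_decompose[OF fin p] unfolding k_def by blast
  moreover have "order G div p ^ k = m" using m(1) p prime_gt_0_nat by simp
  ultimately show ?thesis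
    using fin p P is_group unfolding sylow_setting_def sylow_setting_axioms_def sylow_subgroup_def k_def
    by simp
qed

lemma p_subgroup_le_sylow:
  assumes fin: "finite (carrier G)" and p: "Factorial_Ring.prime p" and Q: "p_subgroup G p Q"
  obtains P where "sylow_subgroup G p P" and "Q \<subseteq> P"
proof -
  obtain P0 where P0: "sylow_subgroup G p P0" using sylow_subgroup_exists[OF fin p] by blast
  interpret sylow_setting G p "multiplicity p (order G)" "order G div p ^ multiplicity p (order G)" P0
    using sylow_setting_of_sylow_subgroup[OF fin p P0] .
  obtain k where Qs: "subgroup Q G" and card_Q: "card Q = p ^ k" using Q unfolding p_subgroup_def by blast
  obtain g where g: "g \<in> carrier G" "\<forall>q\<in>Q. inv g \<otimes> q \<otimes> g \<in> P0"
    using p_subgroup_conj_into_sylow[OF subgroup_self P_carrier Qs subgroup.subset[OF Qs] card_Q] by blast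
  define P where "P = (\<lambda>x. g \<otimes> x \<otimes> inv g) ` P0"
  have "sylow_subgroup G p P"
    using conj_subgroup[OF P g(1)] card_conj_image[OF P_carrier g(1)] card_P
    unfolding P_def sylow_subgroup_def by simp
  moreover have "Q \<subseteq> P"
  proof
    fix q assume q: "q \<in> Q"
    then have "q = g \<otimes> (inv g \<otimes> q \<otimes> g) \<otimes> inv g"
      using conj_inv_conj g(1) subgroup.mem_carrier[OF Qs] by auto
    then show "q \<in> P" using g(2) q unfolding P_def by blast
  qed
  ultimately show thesis using that by blast
qed

lemma artin_reg_val_p_subgroup:
  assumes fin: "finite (carrier G)" and p: "Factorial_Ring.prime p"
    and cyclic: "\<And>P. sylow_subgroup G p P \<Longrightarrow> cyclic_subgroup G P"
    and A: "artin_coeffs G R \<alpha>" and Q: "p_subgroup G p Q" "Q \<noteq> {\<one>}"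
  shows "artin_reg_val G p R \<alpha> = - of_nat (multiplicity p (order G))
           * (1 - of_nat (card (centralizer G Q)) / of_nat (card (normalizer G Q)))"
proof -
  obtain P where sylow: "sylow_subgroup G p P" "Q \<subseteq> P" using p_subgroup_le_sylow[OF fin p Q(1)] by blast
  obtain y where "y \<in> carrier G" "P = generate G {y}"
    using cyclic[OF sylow(1)] unfolding cyclic_subgroup_def by blast
  then interpret cyclic_sylow G p "multiplicity p (order G)"
      "order G div p ^ multiplicity p (order G)" P y
    using sylow_setting_of_sylow_subgroup[OF fin p sylow(1)] by (simp add: cyclic_sylow_def cyclic_sylow_axioms_def)
  show ?thesis
    using artin_reg_val_cyclic_sylow_subgroup[OF A _ sylow(2) Q(2)] Q(1) unfolding p_subgroup_def by blast
qed

end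

theorem corollary5p11:
  fixes G (structure) and p r :: nat
  assumes "group G" and "finite (carrier G)" and "Factorial_Ring.prime p"
    and "\<forall>P. sylow_subgroup G p P \<longrightarrow> cyclic_subgroup G P \<and> card P = p ^ r"
  shows "\<forall>R \<alpha>. artin_coeffs G R \<alpha> \<longrightarrow>
           (r \<ge> 1 \<longrightarrow> (\<forall>Q. p_subgroup G p Q \<and> Q \<noteq> {\<one>} \<longrightarrow>
               artin_reg_val G p R \<alpha> =
                 - of_nat r * (1 - of_nat (card (centralizer G Q)) / of_nat (card (normalizer G Q)))))
         \<and> (r = 0 \<longrightarrow> artin_reg_val G p R \<alpha> = 0)"
proof (intro allI impI conjI)
  interpret group G by fact
  have r: "multiplicity p (order G) = r"
    using multiplicity_order_eq_sylow_exponent[OF assms(2,3)] assms(4) by blast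
  fix R \<alpha> assume A: "artin_coeffs G R \<alpha>"
  show "artin_reg_val G p R \<alpha>
          = - of_nat r * (1 - of_nat (card (centralizer G Q)) / of_nat (card (normalizer G Q)))"
    if "p_subgroup G p Q \<and> Q \<noteq> {\<one>}" for Q
    using artin_reg_val_p_subgroup[OF assms(2,3) _ A] assms(4) that r by auto
  assume "r = 0"
  then have "\<not> p dvd order G"
    using r multiplicity_eq_zero_iff[of "order G" p] assms(2) order_gt_0_iff_finite assms(3) not_prime_unit
    by auto
  then show "artin_reg_val G p R \<alpha> = 0"
    using artin_reg_val_coprime[OF assms(2)] A unfolding artin_coeffs_def by blast
qed

end
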